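(* Let $h=0$, $\rho>0$ and $\varepsilon\in(-\frac{J\rho}2,0]$. Let $I\subset\Lambda$ be an index set of fixed size and $f:\mathbb{R}^{|I|}\to\mathbb{R}$ a bounded $1$-Lipschitz function with respect to $\|\cdot\|_2$. If $\varepsilon\in(-\frac{J\rho}2,0)$ and $\beta=\frac{1/J}{\rho+2\varepsilon/J}$, then \[ \langle f\circ P_I\rangle_{\mathrm{MC}}^{\varepsilon,\rho;N}=\langle f\circ P_I\rangle_{\mathrm{C}}^{\beta,\rho;N}+O(N^{-1/2}). \] If $\varepsilon=0$, then for every $\beta<\frac1{\rho J}$, \[ \langle f\circ P_I\rangle_{\mathrm{MC}}^{0,\rho;N}=\langle f\circ P_I\rangle_{\mathrm{C}}^{\beta,\rho;N}+O(N^{-1/2}). \]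
   Context: Mean-field spherical model with $h=0$: $\phi\in\mathbb{R}^N$ ($N=|\Lambda|$ sites), $J>0$, $H[\phi]=-\frac J{2N}(\sum_x\phi_x)^2$; $P_I$ restricts to sites in $I$. For $|m|<\sqrt\rho$, $\mu_{\mathrm{MC}}^{m,\rho;N}$ is the normalized uniform surface measure on $\{\sum\phi_x=mN,\ \sum\phi_x^2=\rho N\}$. For $\varepsilon\in(-\frac{\rho J}2,0)$, $\mu_{\mathrm{MC}}^{\varepsilon,\rho;N}=\frac12\mu_{\mathrm{MC}}^{\sqrt{-2\varepsilon/J},\rho;N}+\frac12\mu_{\mathrm{MC}}^{-\sqrt{-2\varepsilon/J},\rho;N}$, and $\mu_{\mathrm{MC}}^{0,\rho;N}$ is the $m=0$ ensemble. With $Z_{\mathrm{MC}}(\varepsilon,\rho;N)=(\rho+\frac{2\varepsilon}J)^{(N-3)/2}/\sqrt{-2\varepsilon/J}$, the canonical ensemble is $\langle f\rangle_{\mathrm{C}}^{\beta,\rho;N}=\frac{\int_{-\rho J/2}^0d\varepsilon'\,e^{-\beta\varepsilon'N}Z_{\mathrm{MC}}(\varepsilon',\rho;N)\langle f\rangle_{\mathrm{MC}}^{\varepsilon',\rho;N}}{\int_{-\rho J/2}^0d\varepsilon'\,e^{-\beta\varepsilon'N}Z_{\mathrm{MC}}(\varepsilon',\rho;N)}$, $\beta\in\mathbb{R}$. *)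

theory Defs
  imports "HOL-Analysis.Analysis" "HOL-Library.Landau_Symbols"
begin

text \<open>Lattice Lambda = {..<N}; configurations phi are extensional functions nat => real on {..<N}.\<close>

definition Leb_N :: "nat \<Rightarrow> (nat \<Rightarrow> real) measure" where
  "Leb_N N = PiM {..<N} (\<lambda>_. lborel)"

definition unit_ball_N :: "nat \<Rightarrow> (nat \<Rightarrow> real) set" where
  "unit_ball_N N = {x \<in> space (Leb_N N). (\<Sum>i<N. (x i)\<^sup>2) \<le> 1}"

definition proj0 :: "nat \<Rightarrow> (nat \<Rightarrow> real) \<Rightarrow> (nat \<Rightarrow> real)" where
  "proj0 N x = (\<lambda>i. x i - (\<Sum>j<N. x j) / real N)"

definition norm_N :: "nat \<Rightarrow> (nat \<Rightarrow> real) \<Rightarrow> real" where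
  "norm_N N x = sqrt (\<Sum>i<N. (x i)\<^sup>2)"

text \<open>Map from the unit ball onto the sphere {sum phi = m N, sum phi^2 = rho N}
  (radial projection of the hyperplane component).\<close>
definition to_sphere :: "real \<Rightarrow> real \<Rightarrow> nat \<Rightarrow> (nat \<Rightarrow> real) \<Rightarrow> (nat \<Rightarrow> real)" where
  "to_sphere m \<rho> N x = restrict (\<lambda>i. m + sqrt ((\<rho> - m\<^sup>2) * real N) * proj0 N x i / norm_N N (proj0 N x)) {..<N}"

text \<open>Normalized uniform surface measure on {sum phi = m N, sum phi^2 = rho N}:
  push-forward of the uniform distribution on the unit ball under the radial projection
  of the hyperplane component (the O(N-1)-invariant probability measure on that sphere).\<close>
definition mu_MC_m :: "real \<Rightarrow> real \<Rightarrow> nat \<Rightarrow> (nat \<Rightarrow> real) measure" where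
  "mu_MC_m m \<rho> N = distr (uniform_measure (Leb_N N) (unit_ball_N N))
                          (PiM {..<N} (\<lambda>_. borel)) (to_sphere m \<rho> N)"

definition MC_m_expect :: "real \<Rightarrow> real \<Rightarrow> nat \<Rightarrow> ((nat \<Rightarrow> real) \<Rightarrow> real) \<Rightarrow> real" where
  "MC_m_expect m \<rho> N g = (\<integral>\<phi>. g \<phi> \<partial>mu_MC_m m \<rho> N)"

definition MC_expect :: "real \<Rightarrow> real \<Rightarrow> real \<Rightarrow> nat \<Rightarrow> ((nat \<Rightarrow> real) \<Rightarrow> real) \<Rightarrow> real" where
  "MC_expect J \<epsilon> \<rho> N g =
     (if \<epsilon> = 0 then MC_m_expect 0 \<rho> N g
      else (1/2) * MC_m_expect (sqrt (-2*\<epsilon>/J)) \<rho> N g + (1/2) * MC_m_expect (- sqrt (-2*\<epsilon>/J)) \<rho> N g)"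

definition Z_MC :: "real \<Rightarrow> real \<Rightarrow> real \<Rightarrow> nat \<Rightarrow> real" where
  "Z_MC J \<epsilon> \<rho> N = (\<rho> + 2*\<epsilon>/J) powr ((real N - 3) / 2) / sqrt (-2*\<epsilon>/J)"

definition C_expect :: "real \<Rightarrow> real \<Rightarrow> real \<Rightarrow> nat \<Rightarrow> ((nat \<Rightarrow> real) \<Rightarrow> real) \<Rightarrow> real" where
  "C_expect J \<beta> \<rho> N g =
     (LBINT \<epsilon>'=-\<rho>*J/2..0. exp (-\<beta>*\<epsilon>'*real N) * Z_MC J \<epsilon>' \<rho> N * MC_expect J \<epsilon>' \<rho> N g)
     / (LBINT \<epsilon>'=-\<rho>*J/2..0. exp (-\<beta>*\<epsilon>'*real N) * Z_MC J \<epsilon>' \<rho> N)"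

definition P_I :: "nat set \<Rightarrow> (nat \<Rightarrow> real) \<Rightarrow> (nat \<Rightarrow> real)" where
  "P_I I \<phi> = (\<lambda>i. if i \<in> I then \<phi> i else 0)"

end

theory Submission
  imports Defs "HOL-Probability.Probability_Measure" "HOL-Real_Asymp.Real_Asymp"
begin

(*
  The canonical expectation is the average of the microcanonical expectations MC(e) against the
  weight exp(-beta e N) Z_MC(e).  For a bounded local observable, MC(e) depends on e only through
  m = sqrt(-2e/J) and sqrt(rho - m^2), Lipschitz with a constant independent of N: the microcanonical
  measure is the image of the uniform measure on the ball under an explicit map, and exchangeability
  of the coordinates gives E |u_i| <= 1/sqrt N for the unit direction vector u.  Hence |MC(eps) - C|
  is at most a constant times the weighted mean of |e - eps| (eps < 0) or of sqrt(-2e/J) (eps = 0).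
  At beta = 1/(J (rho + 2 eps/J)) the weight is a Gaussian bump of width N^(-1/2) around eps; for
  eps = 0 and beta < 1/(rho J) it decays like exp(c N e) away from 0.  Quadratic bounds on
  ln(1 + y) - y turn both observations into O(N^(-1/2)) bounds on the weighted means.
*)

section \<open>Uniform measure on the ball and exchangeability\<close>

lemma space_Leb_N: "space (Leb_N N) = PiE {..<N} (\<lambda>_. UNIV)"
  by (simp add: Leb_N_def space_PiM)

lemma measurable_component_Leb_N [measurable]:
  "i < N \<Longrightarrow> (\<lambda>x. x i) \<in> borel_measurable (Leb_N N)"
  using measurable_component_singleton[of i "{..<N}" "\<lambda>_. lborel"] by (simp add: Leb_N_def)

lemma measurable_Leb_N_sum_sq [measurable]:
  "(\<lambda>x. \<Sum>i<N. (x i)\<^sup>2) \<in> borel_measurable (Leb_N N)"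
  by (intro borel_measurable_sum) simp

lemma unit_ball_N_sets [measurable]: "unit_ball_N N \<in> sets (Leb_N N)"
  unfolding unit_ball_N_def by measurable

lemma emeasure_unit_ball_N_finite: "emeasure (Leb_N N) (unit_ball_N N) \<noteq> \<infinity>"
proof -
  interpret product_sigma_finite "\<lambda>_. lborel" by standard
  have "unit_ball_N N \<subseteq> PiE {..<N} (\<lambda>_. {-1..1::real})"
  proof
    fix x assume x: "x \<in> unit_ball_N N"
    have "\<bar>x i\<bar> \<le> 1" if "i < N" for i
    proof -
      have "(x i)\<^sup>2 \<le> (\<Sum>i<N. (x i)\<^sup>2)" using that by (intro member_le_sum) auto
      then show ?thesis using x by (simp add: unit_ball_N_def abs_square_le_1[symmetric])
    qed
    then show "x \<in> PiE {..<N} (\<lambda>_. {-1..1::real})"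
      using x by (auto simp: unit_ball_N_def space_Leb_N PiE_def Pi_def abs_le_iff)
  qed
  then have "emeasure (Leb_N N) (unit_ball_N N) \<le> emeasure (Leb_N N) (PiE {..<N} (\<lambda>_. {-1..1::real}))"
    by (rule emeasure_mono) (simp add: Leb_N_def)
  also have "\<dots> = (\<Prod>i<N. emeasure lborel {-1..1::real})"
    unfolding Leb_N_def by (rule emeasure_PiM) auto
  also have "\<dots> < \<infinity>" by (simp add: power_eq_top_ennreal less_top[symmetric])
  finally show ?thesis by simp
qed

lemma emeasure_unit_ball_N_pos:
  assumes "N \<ge> 1" shows "emeasure (Leb_N N) (unit_ball_N N) \<noteq> 0"
proof -
  interpret product_sigma_finite "\<lambda>_. lborel" by standard
  let ?c = "1 / real N"
  have "PiE {..<N} (\<lambda>_. {-?c..?c}) \<subseteq> unit_ball_N N"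
  proof
    fix x assume x: "x \<in> PiE {..<N} (\<lambda>_. {-?c..?c})"
    have "(\<Sum>i<N. (x i)\<^sup>2) \<le> (\<Sum>i<N. ?c\<^sup>2)"
    proof (intro sum_mono)
      fix i assume "i \<in> {..<N}"
      then have "\<bar>x i\<bar> \<le> ?c" using x by (auto simp: PiE_def Pi_def abs_le_iff)
      then show "(x i)\<^sup>2 \<le> ?c\<^sup>2" by (metis abs_ge_zero power2_abs power_mono)
    qed
    also have "\<dots> \<le> 1" using assms by (simp add: power2_eq_square)
    finally show "x \<in> unit_ball_N N" using x by (auto simp: unit_ball_N_def space_Leb_N PiE_def)
  qed
  then have "emeasure (Leb_N N) (PiE {..<N} (\<lambda>_. {-?c..?c})) \<le> emeasure (Leb_N N) (unit_ball_N N)"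
    by (rule emeasure_mono) simp
  moreover have "emeasure (Leb_N N) (PiE {..<N} (\<lambda>_. {-?c..?c})) = ennreal ((2 / real N) ^ N)"
    unfolding Leb_N_def using assms by (subst emeasure_PiM) (auto simp: ennreal_power)
  moreover have "0 < ennreal ((2 / real N) ^ N)" using assms by simp
  ultimately show ?thesis by (metis leD)
qed

definition ball_uniform :: "nat \<Rightarrow> (nat \<Rightarrow> real) measure" where
  "ball_uniform N = uniform_measure (Leb_N N) (unit_ball_N N)"

lemma prob_space_ball_uniform: "N \<ge> 1 \<Longrightarrow> prob_space (ball_uniform N)"
  unfolding ball_uniform_def
  by (rule prob_space_uniform_measure[OF emeasure_unit_ball_N_pos emeasure_unit_ball_N_finite])

lemma measurable_ball_uniform_iff [simp]:
  "f \<in> measurable (ball_uniform N) M \<longleftrightarrow> f \<in> measurable (Leb_N N) M"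
  by (simp add: ball_uniform_def cong: measurable_cong_sets)

definition permute_coords :: "nat \<Rightarrow> (nat \<Rightarrow> nat) \<Rightarrow> (nat \<Rightarrow> real) \<Rightarrow> nat \<Rightarrow> real" where
  "permute_coords N p x = restrict (x \<circ> p) {..<N}"

lemma measurable_permute_coords:
  assumes "p permutes {..<N}"
  shows "permute_coords N p \<in> measurable (Leb_N N) (Leb_N N)"
  unfolding permute_coords_def Leb_N_def
proof (rule measurable_restrict)
  fix k assume "k \<in> {..<N}"
  then have "p k \<in> {..<N}" using permutes_in_image[OF assms] by simp
  then show "(\<lambda>x. (x \<circ> p) k) \<in> measurable (Pi\<^sub>M {..<N} (\<lambda>_. lborel)) lborel"
    unfolding comp_def by (rule measurable_component_singleton)
qed

lemma distr_Leb_N_permute_coords: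
  assumes p: "p permutes {..<N}"
  shows "distr (Leb_N N) (Leb_N N) (permute_coords N p) = Leb_N N"
proof -
  interpret product_sigma_finite "\<lambda>_. lborel" by standard
  show ?thesis unfolding Leb_N_def
  proof (rule PiM_eqI)
    fix A :: "nat \<Rightarrow> real set" assume A: "\<And>k. k \<in> {..<N} \<Longrightarrow> A k \<in> sets lborel"
    have pN: "p k < N \<longleftrightarrow> k < N" for k using permutes_in_image[OF p, of k] by simp
    have "permute_coords N p -` PiE {..<N} A \<inter> space (Pi\<^sub>M {..<N} (\<lambda>_. lborel))
        = PiE {..<N} (\<lambda>k. A (inv p k))"
    proof -
      have "x (p k) \<in> A k \<longleftrightarrow> x (p k) \<in> A (inv p (p k))" for x k
        using permutes_inverses(2)[OF p] by simp
      then show ?thesis using pN permutes_inverses(1)[OF p]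
        by (auto simp: permute_coords_def space_PiM PiE_def Pi_def extensional_def) (metis pN)
    qed
    then have "emeasure (distr (Pi\<^sub>M {..<N} (\<lambda>_. lborel)) (Pi\<^sub>M {..<N} (\<lambda>_. lborel)) (permute_coords N p)) (PiE {..<N} A)
        = emeasure (Pi\<^sub>M {..<N} (\<lambda>_. lborel)) (PiE {..<N} (\<lambda>k. A (inv p k)))"
      using A measurable_permute_coords[OF p]
      by (subst emeasure_distr) (auto simp: Leb_N_def intro!: sets_PiM_I_finite)
    also have "\<dots> = (\<Prod>k<N. emeasure lborel (A (inv p k)))"
      using A permutes_in_image[OF permutes_inv[OF p]] by (intro emeasure_PiM) auto
    also have "\<dots> = (\<Prod>k<N. emeasure lborel (A k))"
      using prod.permute[OF permutes_inv[OF p], of "\<lambda>k. emeasure lborel (A k)"] by (simp add: comp_def)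
    finally show "emeasure (distr (Pi\<^sub>M {..<N} (\<lambda>_. lborel)) (Pi\<^sub>M {..<N} (\<lambda>_. lborel)) (permute_coords N p)) (PiE {..<N} A)
        = (\<Prod>k\<in>{..<N}. emeasure lborel (A k))" .
  qed auto
qed

lemma sum_permute_coords:
  assumes "p permutes {..<N}"
  shows "(\<Sum>k<N. h (permute_coords N p x k)) = (\<Sum>k<N. h (x k))"
  using sum.permute[OF assms, of "\<lambda>k. h (x k)"] by (simp add: permute_coords_def)

lemma distr_ball_uniform_permute_coords:
  assumes p: "p permutes {..<N}"
  shows "distr (ball_uniform N) (Leb_N N) (permute_coords N p) = ball_uniform N"
proof (rule measure_eqI)
  let ?B = "unit_ball_N N" and ?T = "permute_coords N p"
  have T: "?T \<in> measurable (Leb_N N) (Leb_N N)" by (rule measurable_permute_coords[OF p])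
  fix A assume "A \<in> sets (distr (ball_uniform N) (Leb_N N) ?T)"
  then have A [measurable]: "A \<in> sets (Leb_N N)" by simp
  have "?B \<inter> (?T -` A \<inter> space (Leb_N N)) = ?T -` (?B \<inter> A) \<inter> space (Leb_N N)"
    using sum_permute_coords[OF p, of "\<lambda>t. t\<^sup>2"]
    by (auto simp: unit_ball_N_def space_Leb_N permute_coords_def)
  then have "emeasure (distr (ball_uniform N) (Leb_N N) ?T) A
      = emeasure (distr (Leb_N N) (Leb_N N) ?T) (?B \<inter> A) / emeasure (Leb_N N) ?B"
    using T measurable_sets[OF T A]
    by (simp add: emeasure_distr ball_uniform_def)
  also have "\<dots> = emeasure (ball_uniform N) A"
    by (simp add: distr_Leb_N_permute_coords[OF p] ball_uniform_def)
  finally show "emeasure (distr (ball_uniform N) (Leb_N N) ?T) A = emeasure (ball_uniform N) A" .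
qed (simp add: ball_uniform_def)

lemma integral_ball_uniform_permute_coords:
  assumes p: "p permutes {..<N}" and h: "h \<in> borel_measurable (Leb_N N)"
  shows "(\<integral>x. h (permute_coords N p x) \<partial>ball_uniform N) = (\<integral>x. (h x :: real) \<partial>ball_uniform N)"
proof -
  have "permute_coords N p \<in> measurable (ball_uniform N) (Leb_N N)"
    using measurable_permute_coords[OF p] by simp
  from integral_distr[OF this h] show ?thesis
    by (simp add: distr_ball_uniform_permute_coords[OF p])
qed

definition sphere_direction :: "nat \<Rightarrow> (nat \<Rightarrow> real) \<Rightarrow> nat \<Rightarrow> real" where
  "sphere_direction N x i = proj0 N x i / norm_N N (proj0 N x)"

lemma sum_sphere_direction_sq_le: "(\<Sum>i<N. (sphere_direction N x i)\<^sup>2) \<le> 1"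
proof -
  define s where "s = (\<Sum>i<N. (proj0 N x i)\<^sup>2)"
  have "s \<ge> 0" by (simp add: s_def sum_nonneg)
  then have "(\<Sum>i<N. (sphere_direction N x i)\<^sup>2) = s / s"
    by (simp add: s_def sphere_direction_def norm_N_def power_divide flip: sum_divide_distrib)
  then show ?thesis by simp
qed

lemma abs_sphere_direction_le: "i < N \<Longrightarrow> \<bar>sphere_direction N x i\<bar> \<le> 1"
  using member_le_sum[of i "{..<N}" "\<lambda>i. (sphere_direction N x i)\<^sup>2"] sum_sphere_direction_sq_le[of N x]
  by (simp add: abs_square_le_1[symmetric])

lemma measurable_sphere_direction [measurable]:
  "i < N \<Longrightarrow> (\<lambda>x. sphere_direction N x i) \<in> borel_measurable (Leb_N N)"
  unfolding sphere_direction_def norm_N_def proj0_def by measurable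

lemma sphere_direction_permute_coords:
  assumes p: "p permutes {..<N}" and i: "i < N"
  shows "sphere_direction N (permute_coords N p x) i = sphere_direction N x (p i)"
proof -
  have proj: "proj0 N (permute_coords N p x) k = proj0 N x (p k)" if "k < N" for k
    using that sum_permute_coords[OF p, of id x] by (simp add: proj0_def permute_coords_def)
  have "(\<Sum>k<N. (proj0 N (permute_coords N p x) k)\<^sup>2) = (\<Sum>k<N. (proj0 N x k)\<^sup>2)"
    using proj sum.permute[OF p, of "\<lambda>k. (proj0 N x k)\<^sup>2"] by simp
  then show ?thesis using proj[OF i] by (simp add: sphere_direction_def norm_N_def)
qed

text \<open>By exchangeability of the coordinates all \<open>N\<close> second moments agree, and they sum to at most \<open>1\<close>.\<close>
lemma integral_sphere_direction_sq_le:
  assumes N: "N \<ge> 1" and i: "i < N"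
  shows "(\<integral>x. (sphere_direction N x i)\<^sup>2 \<partial>ball_uniform N) \<le> 1 / real N"
proof -
  interpret prob_space "ball_uniform N" by (rule prob_space_ball_uniform[OF N])
  let ?u = "\<lambda>k x. sphere_direction N x k"
  have int: "integrable (ball_uniform N) (\<lambda>x. (?u k x)\<^sup>2)" if "k < N" for k
    by (rule integrable_const_bound[where B=1])
       (use that abs_sphere_direction_le in \<open>auto simp: abs_square_le_1\<close>)
  have same: "(\<integral>x. (?u k x)\<^sup>2 \<partial>ball_uniform N) = (\<integral>x. (?u i x)\<^sup>2 \<partial>ball_uniform N)" if k: "k < N" for k
  proof -
    have p: "Transposition.transpose i k permutes {..<N}" using i k by (simp add: permutes_swap_id)
    have "(\<integral>x. (?u i (permute_coords N (Transposition.transpose i k) x))\<^sup>2 \<partial>ball_uniform N) = (\<integral>x. (?u i x)\<^sup>2 \<partial>ball_uniform N)"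
      using i by (intro integral_ball_uniform_permute_coords[OF p]) measurable
    then show ?thesis using sphere_direction_permute_coords[OF p i] by simp
  qed
  have "real N * (\<integral>x. (?u i x)\<^sup>2 \<partial>ball_uniform N) = (\<Sum>k<N. \<integral>x. (?u k x)\<^sup>2 \<partial>ball_uniform N)"
    using same by simp
  also have "\<dots> = (\<integral>x. (\<Sum>k<N. (?u k x)\<^sup>2) \<partial>ball_uniform N)"
    using int by (intro Bochner_Integration.integral_sum[symmetric]) auto
  also have "\<dots> \<le> (\<integral>x. 1 \<partial>ball_uniform N)"
    using int sum_sphere_direction_sq_le by (intro integral_mono) auto
  finally show ?thesis using N by (simp add: prob_space field_simps)
qed

lemma integral_abs_sphere_direction_le:
  assumes N: "N \<ge> 1" and i: "i < N"
  shows "sqrt (real N) * (\<integral>x. \<bar>sphere_direction N x i\<bar> \<partial>ball_uniform N) \<le> 1"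
proof -
  interpret prob_space "ball_uniform N" by (rule prob_space_ball_uniform[OF N])
  let ?X = "\<lambda>x. \<bar>sphere_direction N x i\<bar>"
  have int: "integrable (ball_uniform N) ?X" "integrable (ball_uniform N) (\<lambda>x. (?X x)\<^sup>2)"
    using i abs_sphere_direction_le[OF i]
    by (auto intro!: integrable_const_bound[where B=1] simp: abs_square_le_1)
  have "(expectation ?X)\<^sup>2 \<le> expectation (\<lambda>x. (?X x)\<^sup>2)"
    using variance_eq[OF int] variance_positive[of ?X] by simp
  also have "\<dots> \<le> 1 / real N" using integral_sphere_direction_sq_le[OF N i] by simp
  finally have "(sqrt (real N) * expectation ?X)\<^sup>2 \<le> 1\<^sup>2"
    using N by (simp add: field_simps)
  then show ?thesis by (rule power2_le_imp_le) simp
qed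

section \<open>Microcanonical expectations of local observables\<close>

lemma continuous_on_coord_lipschitz:
  fixes g :: "(nat \<Rightarrow> real) \<Rightarrow> real"
  assumes lip: "\<And>x y. \<bar>g x - g y\<bar> \<le> L2_set (\<lambda>i. x i - y i) I"
  shows "continuous_on UNIV g"
proof (rule continuous_at_imp_continuous_on, intro ballI)
  fix x :: "nat \<Rightarrow> real"
  have "isCont (\<lambda>y. y i) x" for i :: nat
    using continuous_on_product_coordinates[of i] continuous_on_eq_continuous_at[OF open_UNIV] by blast
  then have lim: "((\<lambda>y. \<Sum>i\<in>I. \<bar>y i - x i\<bar>) \<longlongrightarrow> 0) (at x)"
    using tendsto_sum[of I "\<lambda>i y. \<bar>y i - x i\<bar>" "\<lambda>_. 0" "at x"]
    by (simp add: isCont_def tendsto_rabs_zero LIM_zero)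
  have "norm (g y - g x) \<le> (\<Sum>i\<in>I. \<bar>y i - x i\<bar>)" for y
    using order_trans[OF lip[of y x] L2_set_le_sum_abs] by simp
  then have "((\<lambda>y. g y - g x) \<longlongrightarrow> 0) (at x)"
    by (intro Lim_null_comparison[OF _ lim] always_eventually) simp
  then show "isCont g x" unfolding isCont_def by (rule LIM_zero_cancel)
qed

lemma L2_set_P_I: "L2_set (\<lambda>i. P_I I x i - P_I I y i) I = L2_set (\<lambda>i. x i - y i) I"
  by (rule L2_set_cong) (auto simp: P_I_def)

lemma measurable_coord_lipschitz:
  fixes g :: "(nat \<Rightarrow> real) \<Rightarrow> real"
  assumes I: "I \<subseteq> {..<N}" and lip: "\<And>x y. \<bar>g x - g y\<bar> \<le> L2_set (\<lambda>i. x i - y i) I"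
  shows "g \<in> borel_measurable (Pi\<^sub>M {..<N} (\<lambda>_. borel))"
proof -
  have "\<bar>g x - g (P_I I x)\<bar> \<le> 0" for x
    using lip[of x "P_I I x"] by (simp add: L2_set_def P_I_def)
  then have "g = g \<circ> P_I I" by fastforce
  moreover have "P_I I \<in> measurable (Pi\<^sub>M {..<N} (\<lambda>_. borel)) borel"
  proof (rule measurable_coordinatewise_then_product)
    fix i show "(\<lambda>x. P_I I x i) \<in> borel_measurable (Pi\<^sub>M {..<N} (\<lambda>_. borel))"
    proof (cases "i \<in> I")
      case True
      then show ?thesis using I by (simp add: P_I_def measurable_component_singleton subset_iff)
    qed (simp add: P_I_def)
  qed
  ultimately show ?thesis
    using borel_measurable_continuous_onI[OF continuous_on_coord_lipschitz[OF lip]]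
    by (metis measurable_comp)
qed

lemma to_sphere_apply:
  "i < N \<Longrightarrow> to_sphere m \<rho> N x i = m + sqrt (\<rho> - m\<^sup>2) * (sqrt (real N) * sphere_direction N x i)"
  by (simp add: to_sphere_def sphere_direction_def real_sqrt_mult)

lemma measurable_to_sphere [measurable]:
  "to_sphere m \<rho> N \<in> measurable (Leb_N N) (Pi\<^sub>M {..<N} (\<lambda>_. borel))"
  unfolding to_sphere_def
proof (rule measurable_restrict)
  fix i assume "i \<in> {..<N}"
  then have [measurable]: "(\<lambda>x. sphere_direction N x i) \<in> borel_measurable (Leb_N N)"
    by (intro measurable_sphere_direction) simp
  have "(\<lambda>x. m + sqrt ((\<rho> - m\<^sup>2) * real N) * sphere_direction N x i) \<in> borel_measurable (Leb_N N)"
    by measurable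
  then show "(\<lambda>x. m + sqrt ((\<rho> - m\<^sup>2) * real N) * proj0 N x i / norm_N N (proj0 N x)) \<in> borel_measurable (Leb_N N)"
    by (simp add: sphere_direction_def)
qed

lemma MC_m_expect_eq_integral:
  assumes "g \<in> borel_measurable (Pi\<^sub>M {..<N} (\<lambda>_. borel))"
  shows "MC_m_expect m \<rho> N g = (\<integral>x. g (to_sphere m \<rho> N x) \<partial>ball_uniform N)"
  unfolding MC_m_expect_def mu_MC_m_def ball_uniform_def[symmetric]
  by (rule integral_distr[OF _ assms]) simp

lemma integrable_MC_m_expect:
  fixes B :: real
  assumes N: "N \<ge> 1" and g: "g \<in> borel_measurable (Pi\<^sub>M {..<N} (\<lambda>_. borel))" and B: "\<And>x. \<bar>g x\<bar> \<le> B"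
  shows "integrable (ball_uniform N) (\<lambda>x. g (to_sphere m \<rho> N x))"
proof -
  interpret prob_space "ball_uniform N" by (rule prob_space_ball_uniform[OF N])
  show ?thesis using g B by (intro integrable_const_bound[where B=B]) auto
qed

lemma abs_MC_m_expect_le:
  fixes B :: real
  assumes N: "N \<ge> 1" and g: "g \<in> borel_measurable (Pi\<^sub>M {..<N} (\<lambda>_. borel))" and B: "\<And>x. \<bar>g x\<bar> \<le> B"
  shows "\<bar>MC_m_expect m \<rho> N g\<bar> \<le> B"
proof -
  interpret prob_space "ball_uniform N" by (rule prob_space_ball_uniform[OF N])
  have "\<bar>\<integral>x. g (to_sphere m \<rho> N x) \<partial>ball_uniform N\<bar> \<le> (\<integral>x. \<bar>g (to_sphere m \<rho> N x)\<bar> \<partial>ball_uniform N)"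
    using integral_norm_bound[of "ball_uniform N" "\<lambda>x. g (to_sphere m \<rho> N x)"] by simp
  also have "\<dots> \<le> (\<integral>x. B \<partial>ball_uniform N)"
    using B order_trans[OF abs_ge_zero B] by (intro integral_mono') auto
  finally show ?thesis by (simp add: MC_m_expect_eq_integral[OF g] prob_space)
qed

lemma coord_lipschitz_to_sphere_le:
  assumes I: "I \<subseteq> {..<N}" and lip: "\<And>x y. \<bar>g x - g y\<bar> \<le> L2_set (\<lambda>i. x i - y i) I"
  shows "\<bar>g (to_sphere m \<rho> N x) - g (to_sphere m' \<rho> N x)\<bar>
    \<le> (\<Sum>i\<in>I. \<bar>m - m'\<bar> + \<bar>sqrt (\<rho> - m\<^sup>2) - sqrt (\<rho> - m'\<^sup>2)\<bar> * (sqrt (real N) * \<bar>sphere_direction N x i\<bar>))"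
proof -
  have "\<bar>g (to_sphere m \<rho> N x) - g (to_sphere m' \<rho> N x)\<bar> \<le> (\<Sum>i\<in>I. \<bar>to_sphere m \<rho> N x i - to_sphere m' \<rho> N x i\<bar>)"
    using lip[of "to_sphere m \<rho> N x" "to_sphere m' \<rho> N x"] L2_set_le_sum_abs by (rule order_trans)
  also have "\<dots> \<le> (\<Sum>i\<in>I. \<bar>m - m'\<bar> + \<bar>sqrt (\<rho> - m\<^sup>2) - sqrt (\<rho> - m'\<^sup>2)\<bar> * (sqrt (real N) * \<bar>sphere_direction N x i\<bar>))"
  proof (rule sum_mono)
    fix i assume "i \<in> I"
    then have "to_sphere m \<rho> N x i - to_sphere m' \<rho> N x i
        = (m - m') + (sqrt (\<rho> - m\<^sup>2) - sqrt (\<rho> - m'\<^sup>2)) * (sqrt (real N) * sphere_direction N x i)"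
      using I by (auto simp: to_sphere_apply algebra_simps)
    then show "\<bar>to_sphere m \<rho> N x i - to_sphere m' \<rho> N x i\<bar>
        \<le> \<bar>m - m'\<bar> + \<bar>sqrt (\<rho> - m\<^sup>2) - sqrt (\<rho> - m'\<^sup>2)\<bar> * (sqrt (real N) * \<bar>sphere_direction N x i\<bar>)"
      by (simp add: abs_mult abs_triangle_ineq[THEN order_trans])
  qed
  finally show ?thesis .
qed

text \<open>The mean of \<open>sqrt N \<bar>sphere_direction N x i\<bar>\<close> is at most \<open>1\<close>, so the bound does not depend on \<open>N\<close>.\<close>
lemma MC_m_expect_lipschitz:
  fixes B :: real
  assumes N: "N \<ge> 1" and I: "I \<subseteq> {..<N}" and B: "\<And>x. \<bar>g x\<bar> \<le> B"
    and lip: "\<And>x y. \<bar>g x - g y\<bar> \<le> L2_set (\<lambda>i. x i - y i) I"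
  shows "\<bar>MC_m_expect m \<rho> N g - MC_m_expect m' \<rho> N g\<bar>
         \<le> real (card I) * (\<bar>m - m'\<bar> + \<bar>sqrt (\<rho> - m\<^sup>2) - sqrt (\<rho> - m'\<^sup>2)\<bar>)"
proof -
  interpret prob_space "ball_uniform N" by (rule prob_space_ball_uniform[OF N])
  have g: "g \<in> borel_measurable (Pi\<^sub>M {..<N} (\<lambda>_. borel))" by (rule measurable_coord_lipschitz[OF I lip])
  let ?G = "\<lambda>a x. g (to_sphere a \<rho> N x)"
  let ?d = "\<bar>sqrt (\<rho> - m\<^sup>2) - sqrt (\<rho> - m'\<^sup>2)\<bar>"
  let ?R = "\<lambda>x. \<Sum>i\<in>I. \<bar>m - m'\<bar> + ?d * (sqrt (real N) * \<bar>sphere_direction N x i\<bar>)"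
  note pointwise = coord_lipschitz_to_sphere_le[OF I lip]
  have u: "integrable (ball_uniform N) (\<lambda>x. \<bar>sphere_direction N x i\<bar>)" if "i \<in> I" for i
    using that I abs_sphere_direction_le[of i N] by (intro integrable_const_bound[where B=1]) auto
  have "\<bar>MC_m_expect m \<rho> N g - MC_m_expect m' \<rho> N g\<bar> = \<bar>\<integral>x. ?G m x - ?G m' x \<partial>ball_uniform N\<bar>"
    using integrable_MC_m_expect[OF N g B] by (simp add: MC_m_expect_eq_integral[OF g])
  also have "\<dots> \<le> (\<integral>x. ?R x \<partial>ball_uniform N)"
  proof -
    have "integrable (ball_uniform N) ?R"
      using u by (intro Bochner_Integration.integrable_sum integrable_add integrable_mult_right) auto
    then have "(\<integral>x. \<bar>?G m x - ?G m' x\<bar> \<partial>ball_uniform N) \<le> (\<integral>x. ?R x \<partial>ball_uniform N)"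
      using pointwise order_trans[OF abs_ge_zero pointwise] by (intro integral_mono') auto
    then show ?thesis
      by (rule order_trans[OF integral_norm_bound[of _ "\<lambda>x. ?G m x - ?G m' x", unfolded real_norm_def]])
  qed
  also have "\<dots> = (\<Sum>i\<in>I. \<bar>m - m'\<bar> + ?d * (sqrt (real N) * (\<integral>x. \<bar>sphere_direction N x i\<bar> \<partial>ball_uniform N)))"
    using u by (subst Bochner_Integration.integral_sum) (auto simp: prob_space)
  also have "\<dots> \<le> (\<Sum>i\<in>I. \<bar>m - m'\<bar> + ?d)"
    using integral_abs_sphere_direction_le[OF N] I
    by (intro sum_mono add_left_mono mult_left_le[OF _ abs_ge_zero]) auto
  finally show ?thesis by (simp only: sum_constant)
qed

lemma MC_expect_eq_average:
  "x \<le> 0 \<Longrightarrow> MC_expect J x \<rho> N g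
     = (MC_m_expect (sqrt (-2*x/J)) \<rho> N g + MC_m_expect (- sqrt (-2*x/J)) \<rho> N g) / 2"
  by (cases "x = 0") (simp_all add: MC_expect_def)

lemma MC_expect_dist:
  fixes B :: real
  assumes J: "J > 0" and x: "x \<le> 0" and x': "x' \<le> 0"
    and N: "N \<ge> 1" and I: "I \<subseteq> {..<N}" and B: "\<And>x. \<bar>g x\<bar> \<le> B"
    and lip: "\<And>x y. \<bar>g x - g y\<bar> \<le> L2_set (\<lambda>i. x i - y i) I"
  shows "\<bar>MC_expect J x \<rho> N g - MC_expect J x' \<rho> N g\<bar>
    \<le> real (card I) * (\<bar>sqrt (-2*x/J) - sqrt (-2*x'/J)\<bar> + \<bar>sqrt (\<rho> + 2*x/J) - sqrt (\<rho> + 2*x'/J)\<bar>)"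
proof -
  let ?E = "\<lambda>m. MC_m_expect m \<rho> N g"
  define m m' where "m = sqrt (-2*x/J)" and "m' = sqrt (-2*x'/J)"
  define c where "c = real (card I) * (\<bar>m - m'\<bar> + \<bar>sqrt (\<rho> - m\<^sup>2) - sqrt (\<rho> - m'\<^sup>2)\<bar>)"
  have "\<bar>?E m - ?E m'\<bar> \<le> c" and "\<bar>?E (-m) - ?E (-m')\<bar> \<le> c"
    using MC_m_expect_lipschitz[OF N I B lip, of m _ m'] MC_m_expect_lipschitz[OF N I B lip, of "-m" _ "-m'"]
    by (simp_all add: c_def abs_minus_commute)
  then have "\<bar>(?E m + ?E (-m)) / 2 - (?E m' + ?E (-m')) / 2\<bar> \<le> c"
    using abs_triangle_ineq[of "?E m - ?E m'" "?E (-m) - ?E (-m')"] by (simp add: field_simps)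
  moreover have "m\<^sup>2 = -2*x/J" "m'\<^sup>2 = -2*x'/J"
    unfolding m_def m'_def by (intro real_sqrt_pow2 divide_nonneg_pos; use J x x' in simp)+
  ultimately show ?thesis
    unfolding MC_expect_eq_average[OF x] MC_expect_eq_average[OF x'] m_def[symmetric] m'_def[symmetric]
    by (simp add: c_def)
qed

lemma abs_MC_expect_le:
  fixes B :: real
  assumes "x \<le> 0" and N: "N \<ge> 1" and g: "g \<in> borel_measurable (Pi\<^sub>M {..<N} (\<lambda>_. borel))"
    and B: "\<And>x. \<bar>g x\<bar> \<le> B"
  shows "\<bar>MC_expect J x \<rho> N g\<bar> \<le> B"
  using abs_MC_m_expect_le[OF N g B, of "sqrt (-2*x/J)" \<rho>] abs_MC_m_expect_le[OF N g B, of "- sqrt (-2*x/J)" \<rho>]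
  by (simp add: MC_expect_eq_average[OF assms(1)])

lemma continuous_on_MC_expect:
  fixes B :: real
  assumes J: "J > 0" and N: "N \<ge> 1" and I: "I \<subseteq> {..<N}" and B: "\<And>x. \<bar>g x\<bar> \<le> B"
    and lip: "\<And>x y. \<bar>g x - g y\<bar> \<le> L2_set (\<lambda>i. x i - y i) I"
  shows "continuous_on {..0} (\<lambda>x. MC_expect J x \<rho> N g)"
  unfolding continuous_on_def
proof (intro ballI)
  fix x :: real assume "x \<in> {..0}"
  let ?G = "\<lambda>x. MC_expect J x \<rho> N g"
  let ?h = "\<lambda>y. real (card I) * (\<bar>sqrt (-2*y/J) - sqrt (-2*x/J)\<bar> + \<bar>sqrt (\<rho> + 2*y/J) - sqrt (\<rho> + 2*x/J)\<bar>)"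
  have "(?h \<longlongrightarrow> ?h x) (at x within {..0})" using J by (intro tendsto_intros) auto
  then have lim: "(?h \<longlongrightarrow> 0) (at x within {..0})" by simp
  have "\<forall>\<^sub>F y in at x within {..0}. norm (?G y - ?G x) \<le> ?h y"
    using MC_expect_dist[OF J _ _ N I B lip] \<open>x \<in> {..0}\<close> by (auto simp: eventually_at_filter)
  from Lim_null_comparison[OF this lim] have "((\<lambda>y. ?G y - ?G x) \<longlongrightarrow> 0) (at x within {..0})" .
  then show "(?G \<longlongrightarrow> ?G x) (at x within {..0})" by (rule LIM_zero_cancel)
qed

section \<open>The canonical ensemble as a mixture of microcanonical ones\<close>

definition canonical_weight :: "real \<Rightarrow> real \<Rightarrow> real \<Rightarrow> nat \<Rightarrow> real \<Rightarrow> real" where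
  "canonical_weight J \<beta> \<rho> N x = exp (-\<beta>*x*real N) * Z_MC J x \<rho> N"

lemma C_expect_eq_weighted_average:
  assumes "J > 0" "\<rho> > 0"
  shows "C_expect J \<beta> \<rho> N g
    = (LINT x:{-\<rho>*J/2<..<0}|lborel. canonical_weight J \<beta> \<rho> N x * MC_expect J x \<rho> N g)
      / (LINT x:{-\<rho>*J/2<..<0}|lborel. canonical_weight J \<beta> \<rho> N x)"
  using assms unfolding C_expect_def canonical_weight_def
  by (simp add: interval_integral_Ioo zero_ereal_def)

lemma weighted_average_deviation_le:
  fixes W G K :: "real \<Rightarrow> real" and S :: "real set"
  assumes S: "S \<in> sets lborel"
    and W: "set_integrable lborel S W" "\<And>x. x \<in> S \<Longrightarrow> 0 \<le> W x" "0 < (LINT x:S|lborel. W x)"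
    and G: "set_borel_measurable lborel S G" "\<And>x. x \<in> S \<Longrightarrow> \<bar>G x\<bar> \<le> B"
    and K: "set_integrable lborel S (\<lambda>x. W x * K x)" "\<And>x. x \<in> S \<Longrightarrow> \<bar>c - G x\<bar> \<le> K x"
  shows "\<bar>c - (LINT x:S|lborel. W x * G x) / (LINT x:S|lborel. W x)\<bar>
         \<le> (LINT x:S|lborel. W x * K x) / (LINT x:S|lborel. W x)"
proof -
  have WG: "set_integrable lborel S (\<lambda>x. W x * G x)"
  proof (rule set_integrable_bound[OF set_integrable_mult_right[OF W(1), of B]])
    have "(\<lambda>x. (indicator S x *\<^sub>R W x) * (indicator S x *\<^sub>R G x)) \<in> borel_measurable lborel"
      using borel_measurable_integrable[OF W(1)[unfolded set_integrable_def]] G(1)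
      unfolding set_borel_measurable_def by (rule borel_measurable_times)
    then show "set_borel_measurable lborel S (\<lambda>x. W x * G x)"
      unfolding set_borel_measurable_def by (rule measurable_cong[THEN iffD1, rotated]) (simp add: indicator_def)
    have "\<bar>W x * G x\<bar> \<le> \<bar>B * W x\<bar>" if "x \<in> S" for x
    proof -
      have "\<bar>W x * G x\<bar> = W x * \<bar>G x\<bar>" using W(2)[OF that] by (simp add: abs_mult)
      also have "\<dots> \<le> W x * \<bar>B\<bar>" using G(2)[OF that] W(2)[OF that] by (intro mult_left_mono) auto
      also have "\<dots> = \<bar>B * W x\<bar>" using W(2)[OF that] by (simp add: abs_mult)
      finally show ?thesis .
    qed
    then show "AE x\<in>S in lborel. norm (W x * G x) \<le> norm (B * W x)" by simp
  qed
  have WcG: "set_integrable lborel S (\<lambda>x. W x * (c - G x))"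
    using set_integral_diff(1)[OF set_integrable_mult_right[OF W(1), of c] WG] by (simp add: algebra_simps)
  have "(LINT x:S|lborel. W x * (c - G x)) = c * (LINT x:S|lborel. W x) - (LINT x:S|lborel. W x * G x)"
    using set_integral_diff(2)[OF set_integrable_mult_right[OF W(1), of c] WG]
    by (simp add: algebra_simps)
  then have "c - (LINT x:S|lborel. W x * G x) / (LINT x:S|lborel. W x)
      = (LINT x:S|lborel. W x * (c - G x)) / (LINT x:S|lborel. W x)"
    using W(3) by (simp add: field_simps)
  moreover have "- K x \<le> c - G x" "c - G x \<le> K x" if "x \<in> S" for x
    using K(2)[OF that] by (simp_all add: abs_le_iff)
  then have lo: "- (W x * K x) \<le> W x * (c - G x)" and up: "W x * (c - G x) \<le> W x * K x" if "x \<in> S" for x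
    using mult_left_mono[OF _ W(2)[OF that], of "- K x"] mult_left_mono[OF _ W(2)[OF that]] that by auto
  have "(LINT x:S|lborel. - (W x * K x)) \<le> (LINT x:S|lborel. W x * (c - G x))"
    using set_integrable_mult_right[OF K(1), of "-1"] WcG lo by (intro set_integral_mono) auto
  moreover have "(LINT x:S|lborel. W x * (c - G x)) \<le> (LINT x:S|lborel. W x * K x)"
    using K(1) WcG up by (intro set_integral_mono) auto
  ultimately show ?thesis
    using W(3) set_integral_uminus[OF K(1)] by (simp add: abs_le_iff divide_right_mono)
qed

lemma energy_interval_bounds:
  fixes J \<rho> x :: real
  assumes J: "J > 0" and x: "x \<in> {-\<rho>*J/2<..<0}"
  shows "0 < \<rho> + 2*x/J" "\<rho> + 2*x/J < \<rho>" "0 < -2*x/J" "-2*x/J < \<rho>"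
proof -
  have "-\<rho> < 2*x/J" "2*x/J < 0" using x J by (auto simp: field_simps)
  then show "0 < \<rho> + 2*x/J" "\<rho> + 2*x/J < \<rho>" "0 < -2*x/J" "-2*x/J < \<rho>" by auto
qed

lemma canonical_weight_eq:
  "x < 0 \<Longrightarrow> J > 0 \<Longrightarrow> canonical_weight J \<beta> \<rho> N x
     = exp (-\<beta>*x*real N) * (\<rho> + 2*x/J) powr ((real N - 3) / 2) / sqrt (-2*x/J)"
  by (simp add: canonical_weight_def Z_MC_def)

lemma canonical_weight_pos:
  "J > 0 \<Longrightarrow> x \<in> {-\<rho>*J/2<..<0} \<Longrightarrow> 0 < canonical_weight J \<beta> \<rho> N x"
  using energy_interval_bounds[of J x \<rho>] by (simp add: canonical_weight_eq)

lemma continuous_on_canonical_weight: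
  "J > 0 \<Longrightarrow> continuous_on {-\<rho>*J/2<..<0} (canonical_weight J \<beta> \<rho> N)"
  unfolding canonical_weight_def Z_MC_def
  by (intro continuous_intros) (auto dest: energy_interval_bounds)

lemma set_integrable_inv_sqrt:
  assumes a: "a < 0" and J: "J > 0"
  shows "set_integrable lborel {a<..<0} (\<lambda>x. 1 / sqrt (-2*x/J))"
proof -
  define F where "F x = - J * sqrt (-2*x/J)" for x :: real
  have pos: "0 < -2*x/J" if "x < 0" for x using that J by (simp add: field_simps)
  have "set_integrable lborel (einterval (ereal a) (ereal 0)) (\<lambda>x. 1 / sqrt (-2*x/J))"
  proof (rule interval_integral_FTC_nonneg(1)[where F=F and A="F a" and B="F 0"])
    fix x assume "ereal a < ereal x" "ereal x < ereal 0"
    then have x: "x < 0" by simp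
    have "DERIV F x :> - J * (inverse (sqrt (-2*x/J)) / 2 * (-2 / J))"
      unfolding F_def using pos[OF x] by (auto intro!: derivative_eq_intros)
    then show "DERIV F x :> 1 / sqrt (-2*x/J)" using J by (simp add: field_simps)
    show "isCont (\<lambda>x. 1 / sqrt (-2*x/J)) x" using pos[OF x] by (intro continuous_intros) auto
  next
    show "AE x in lborel. ereal a < ereal x \<longrightarrow> ereal x < ereal 0 \<longrightarrow> 0 \<le> 1 / sqrt (-2*x/J)"
      using pos by (intro AE_I2) (auto simp: less_imp_le)
    show "((F \<circ> real_of_ereal) \<longlongrightarrow> F a) (at_right (ereal a))"
      and "((F \<circ> real_of_ereal) \<longlongrightarrow> F 0) (at_left (ereal 0))"
      unfolding ereal_tendsto_simps1 F_def using J by (intro tendsto_intros; simp)+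
  qed (use a in simp)
  moreover have "einterval (ereal a) (ereal 0) = {a<..<0}" by (auto simp: einterval_def)
  ultimately show ?thesis by simp
qed

lemma canonical_weight_le:
  assumes J: "J > 0" and \<rho>: "\<rho> > 0" and N: "N \<ge> 3" and x: "x \<in> {-\<rho>*J/2<..<0}"
  shows "canonical_weight J \<beta> \<rho> N x
    \<le> exp (\<bar>\<beta>\<bar> * (\<rho>*J/2) * real N) * \<rho> powr ((real N - 3) / 2) / sqrt (-2*x/J)"
proof -
  note t = energy_interval_bounds[OF J x]
  have "-\<beta>*x \<le> \<bar>\<beta>\<bar> * \<bar>x\<bar>" by (metis abs_ge_minus_self abs_mult minus_mult_left)
  also have "\<dots> \<le> \<bar>\<beta>\<bar> * (\<rho>*J/2)" using x by (intro mult_left_mono) auto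
  finally have e: "exp (-\<beta>*x*real N) \<le> exp (\<bar>\<beta>\<bar> * (\<rho>*J/2) * real N)"
    by (intro exp_mono mult_right_mono) auto
  have p: "(\<rho> + 2*x/J) powr ((real N - 3) / 2) \<le> \<rho> powr ((real N - 3) / 2)"
    using t N by (intro powr_mono2) auto
  have "canonical_weight J \<beta> \<rho> N x = exp (-\<beta>*x*real N) * (\<rho> + 2*x/J) powr ((real N - 3) / 2) / sqrt (-2*x/J)"
    using x J by (subst canonical_weight_eq) auto
  also have "\<dots> \<le> exp (\<bar>\<beta>\<bar> * (\<rho>*J/2) * real N) * \<rho> powr ((real N - 3) / 2) / sqrt (-2*x/J)"
    using t by (intro divide_right_mono mult_mono[OF e p]) auto
  finally show ?thesis .
qed

lemma set_integrable_canonical_weight_mult: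
  fixes K :: "real \<Rightarrow> real"
  assumes J: "J > 0" and \<rho>: "\<rho> > 0" and N: "N \<ge> 3"
    and K: "continuous_on {-\<rho>*J/2<..<0} K" "\<And>x. x \<in> {-\<rho>*J/2<..<0} \<Longrightarrow> \<bar>K x\<bar> \<le> C"
  shows "set_integrable lborel {-\<rho>*J/2<..<0} (\<lambda>x. canonical_weight J \<beta> \<rho> N x * K x)"
proof (rule set_integrable_bound)
  let ?S = "{-\<rho>*J/2<..<0}" and ?A = "exp (\<bar>\<beta>\<bar> * (\<rho>*J/2) * real N) * \<rho> powr ((real N - 3) / 2)"
  show "set_integrable lborel ?S (\<lambda>x. \<bar>C\<bar> * ?A * (1 / sqrt (-2*x/J)))"
    by (intro set_integrable_mult_right set_integrable_inv_sqrt) (use J \<rho> in auto)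
  have "continuous_on ?S (\<lambda>x. canonical_weight J \<beta> \<rho> N x * K x)"
    by (intro continuous_intros continuous_on_canonical_weight J K)
  from borel_measurable_continuous_on_indicator[OF _ this]
  show "set_borel_measurable lborel ?S (\<lambda>x. canonical_weight J \<beta> \<rho> N x * K x)"
    by (simp add: set_borel_measurable_def)
  have bound: "\<bar>canonical_weight J \<beta> \<rho> N x * K x\<bar> \<le> \<bar>C\<bar> * ?A * (1 / sqrt (-2*x/J))" if x: "x \<in> ?S" for x
  proof -
    have "0 \<le> ?A / sqrt (-2*x/J)" "\<bar>K x\<bar> \<le> \<bar>C\<bar>"
      using energy_interval_bounds[OF J x] K(2)[OF x] by auto
    have "\<bar>canonical_weight J \<beta> \<rho> N x * K x\<bar> = canonical_weight J \<beta> \<rho> N x * \<bar>K x\<bar>"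
      using canonical_weight_pos[OF J x, of \<beta> N] by (simp add: abs_mult)
    also have "\<dots> \<le> ?A / sqrt (-2*x/J) * \<bar>C\<bar>"
      by (rule mult_mono[OF canonical_weight_le[OF J \<rho> N x]]) (use \<open>\<bar>K x\<bar> \<le> \<bar>C\<bar>\<close> \<open>0 \<le> ?A / sqrt (-2*x/J)\<close> in auto)
    finally show ?thesis by (simp add: mult_ac)
  qed
  show "AE x\<in>?S in lborel. norm (canonical_weight J \<beta> \<rho> N x * K x) \<le> norm (\<bar>C\<bar> * ?A * (1 / sqrt (-2*x/J)))"
  proof (intro AE_I2 impI)
    fix x assume "x \<in> ?S"
    from order_trans[OF bound[OF this] abs_ge_self]
    show "norm (canonical_weight J \<beta> \<rho> N x * K x) \<le> norm (\<bar>C\<bar> * ?A * (1 / sqrt (-2*x/J)))"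
      by (simp only: real_norm_def)
  qed
qed

lemma set_integral_pos:
  fixes f :: "'a \<Rightarrow> real"
  assumes f: "set_integrable M S f" "\<And>x. x \<in> S \<Longrightarrow> 0 < f x"
    and S: "S \<in> sets M" "emeasure M S \<noteq> 0"
  shows "0 < (LINT x:S|M. f x)"
proof -
  have int: "integrable M (\<lambda>x. indicator S x * f x)" using f(1) by (simp add: set_integrable_def)
  have "0 \<le> (LINT x:S|M. f x)"
    using f(2) unfolding set_lebesgue_integral_def
    by (intro integral_nonneg_AE) (auto simp: indicator_def less_imp_le)
  moreover have "(LINT x:S|M. f x) \<noteq> 0"
  proof
    assume "(LINT x:S|M. f x) = 0"
    moreover have "(LINT x:S|M. indicator S x * f x) = (LINT x:S|M. f x)"
      unfolding set_lebesgue_integral_def by (intro Bochner_Integration.integral_cong) (auto simp: indicator_def)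
    ultimately have "(LINT x:S|M. indicator S x * f x) = 0" by simp
    then have "S \<in> null_sets M"
      using f(2) S(1) by (intro null_if_pos_func_has_zero_int[OF int]) auto
    then show False using S(2) by auto
  qed
  ultimately show ?thesis by simp
qed

lemma canonical_weight_integral_pos:
  assumes J: "J > 0" and \<rho>: "\<rho> > 0" and N: "N \<ge> 3"
  shows "0 < (LINT x:{-\<rho>*J/2<..<0}|lborel. canonical_weight J \<beta> \<rho> N x)"
  using set_integrable_canonical_weight_mult[OF J \<rho> N continuous_on_const, of 1 1 \<beta>] J \<rho>
  by (intro set_integral_pos) (auto simp: canonical_weight_pos)

lemma C_expect_deviation_le:
  fixes B C :: real and K :: "real \<Rightarrow> real"
  assumes J: "J > 0" and \<rho>: "\<rho> > 0" and N: "N \<ge> 3" and I: "I \<subseteq> {..<N}" and B: "\<And>x. \<bar>g x\<bar> \<le> B"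
    and lip: "\<And>x y. \<bar>g x - g y\<bar> \<le> L2_set (\<lambda>i. x i - y i) I"
    and K: "continuous_on {-\<rho>*J/2<..<0} K" "\<And>x. x \<in> {-\<rho>*J/2<..<0} \<Longrightarrow> \<bar>K x\<bar> \<le> C"
    and dev: "\<And>x. x \<in> {-\<rho>*J/2<..<0} \<Longrightarrow> \<bar>c - MC_expect J x \<rho> N g\<bar> \<le> K x"
  shows "\<bar>c - C_expect J \<beta> \<rho> N g\<bar>
     \<le> (LINT x:{-\<rho>*J/2<..<0}|lborel. canonical_weight J \<beta> \<rho> N x * K x)
        / (LINT x:{-\<rho>*J/2<..<0}|lborel. canonical_weight J \<beta> \<rho> N x)"
  unfolding C_expect_eq_weighted_average[OF J \<rho>]
proof (rule weighted_average_deviation_le)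
  let ?S = "{-\<rho>*J/2<..<0}"
  have N1: "N \<ge> 1" using N by simp
  show "set_integrable lborel ?S (canonical_weight J \<beta> \<rho> N)"
    using set_integrable_canonical_weight_mult[OF J \<rho> N continuous_on_const, of 1 1 \<beta>] by simp
  have "continuous_on ?S (\<lambda>x. MC_expect J x \<rho> N g)"
    by (rule continuous_on_subset[OF continuous_on_MC_expect[OF J N1 I B lip]]) auto
  from borel_measurable_continuous_on_indicator[OF _ this]
  show "set_borel_measurable lborel ?S (\<lambda>x. MC_expect J x \<rho> N g)"
    by (simp add: set_borel_measurable_def)
  show "set_integrable lborel ?S (\<lambda>x. canonical_weight J \<beta> \<rho> N x * K x)"
    by (rule set_integrable_canonical_weight_mult[OF J \<rho> N K])
  show "\<bar>MC_expect J x \<rho> N g\<bar> \<le> B" if "x \<in> ?S" for x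
    using that abs_MC_expect_le[OF _ N1 measurable_coord_lipschitz[OF I lip] B] by auto
qed (use canonical_weight_pos[OF J, THEN less_imp_le] canonical_weight_integral_pos[OF J \<rho> N] dev in auto)

section \<open>Laplace estimates for the canonical weight\<close>

lemma ln_add_one_minus_le:
  fixes y R :: real
  assumes y: "-1 < y" and R: "1 + y \<le> R" "1 \<le> R"
  shows "ln (1 + y) - y \<le> - y\<^sup>2 / (2 * R)"
proof -
  define h where "h z = ln (1 + z) - z + z\<^sup>2 / (2 * R)" for z :: real
  have h': "DERIV h z :> z * (1 / R - 1 / (1 + z))" if "-1 < z" for z
  proof -
    have "DERIV h z :> 1 / (1 + z) - 1 + 2 * z / (2 * R)"
      unfolding h_def using that R by (auto intro!: derivative_eq_intros)
    then show ?thesis using that R by (simp add: field_simps)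
  qed
  have mono: "1 / R \<le> 1 / (1 + z)" if "-1 < z" "z \<le> y" for z
    using that R by (intro divide_left_mono) auto
  have "h y \<le> h 0"
  proof (cases "0 \<le> y")
    case True
    show ?thesis
    proof (rule DERIV_nonpos_imp_nonincreasing[where f=h, OF True])
      fix z assume "0 \<le> z" "z \<le> y"
      then show "\<exists>d. DERIV h z :> d \<and> d \<le> 0"
        using h'[of z] mono[of z] by (intro exI[of _ "z * (1 / R - 1 / (1 + z))"]) (auto intro: mult_nonneg_nonpos)
    qed
  next
    case False
    show ?thesis
    proof (rule DERIV_nonneg_imp_nondecreasing[where f=h])
      show "y \<le> 0" using False by simp
      fix z assume "y \<le> z" "z \<le> 0"
      then have "1 / R \<le> 1 / (1 + z)" using R y by (intro divide_left_mono) auto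
      then show "\<exists>d. DERIV h z :> d \<and> 0 \<le> d"
        using h'[of z] \<open>y \<le> z\<close> \<open>z \<le> 0\<close> y
        by (intro exI[of _ "z * (1 / R - 1 / (1 + z))"]) (auto intro: mult_nonpos_nonpos)
    qed
  qed
  then show ?thesis by (simp add: h_def)
qed

lemma ln_add_one_minus_ge:
  fixes y :: real
  assumes "\<bar>y\<bar> \<le> 1/2"
  shows "- 2 * y\<^sup>2 \<le> ln (1 + y) - y"
proof (cases "0 \<le> y")
  case True
  then have "y - y\<^sup>2 \<le> ln (1 + y)" using assms by (intro ln_one_plus_pos_lower_bound) auto
  then show ?thesis using zero_le_power2[of y] by linarith
next
  case False
  then have "- (-y) - 2 * (-y)\<^sup>2 \<le> ln (1 - (-y))" using assms by (intro ln_one_minus_pos_lower_bound) auto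
  then show ?thesis by simp
qed

text \<open>With \<open>t = \<rho> + 2e/J\<close> and \<open>y = 2(x - e)/(J t)\<close> one has \<open>\<rho> + 2x/J = t (1 + y)\<close>, so the density
  factors exactly around the base point \<open>e\<close>.\<close>
lemma tilted_power_expansion:
  fixes J \<rho> \<beta> e x t y :: real and N :: nat
  assumes J: "J > 0" and t: "t = \<rho> + 2*e/J" "0 < t" and y: "y = 2*(x - e)/(J*t)" "0 < 1 + y"
  shows "exp (-\<beta>*x*real N) * (\<rho> + 2*x/J) powr ((real N - 3) / 2)
    = exp (-\<beta>*e*real N) * t powr ((real N - 3) / 2)
      * exp ((real N - 3) / 2 * (ln (1 + y) - y) + ((real N - 3) * (1/(J*t) - \<beta>) - 3*\<beta>) * (x - e))"
proof -
  define M where "M = (real N - 3) / 2"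
  have ty: "t * y = 2*(x - e)/J" using J t(2) unfolding y(1) by (simp add: field_simps)
  have "t * (1 + y) = t + t * y" by (simp add: algebra_simps)
  also have "\<dots> = \<rho> + 2*x/J" by (simp only: ty) (use J in \<open>simp add: t(1) field_simps\<close>)
  finally have xt: "\<rho> + 2*x/J = t * (1 + y)" by simp
  have "-\<beta>*x*real N + M * (ln t + ln (1 + y))
      = (-\<beta>*e*real N + M * ln t) + (M * (ln (1 + y) - y) + ((real N - 3) * (1/(J*t) - \<beta>) - 3*\<beta>) * (x - e))"
    using J t(2) unfolding y(1) by (simp add: M_def field_simps)
  then show ?thesis
    using t y by (simp add: xt powr_def ln_mult exp_add[symmetric] flip: M_def)
qed

lemma einterval_ereal: "einterval (ereal u) (ereal v) = {u<..<v}"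
  by (auto simp: einterval_def)

lemma set_integral_gauss_abs_le:
  fixes a b e q :: real
  assumes ae: "a \<le> e" and eb: "e \<le> b" and q: "q > 0"
  shows "set_integrable lborel {a<..<b} (\<lambda>x. exp (- q * (x - e)\<^sup>2) * \<bar>x - e\<bar>)"
    and "(LINT x:{a<..<b}|lborel. exp (- q * (x - e)\<^sup>2) * \<bar>x - e\<bar>) \<le> 1 / q"
proof -
  let ?h = "\<lambda>x. exp (- q * (x - e)\<^sup>2) * \<bar>x - e\<bar>"
  have ii: "interval_lebesgue_integrable lborel (ereal u) (ereal v) ?h" for u v
    by (intro interval_integrable_isCont continuous_intros)
  show "set_integrable lborel {a<..<b} ?h"
    using ii[of a b] ae eb by (simp add: interval_lebesgue_integrable_def einterval_ereal)
  define F where "F s x = s * exp (- q * (x - e)\<^sup>2) / (2 * q)" for s x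
  have F': "(F s has_vector_derivative ?h x) (at x within X)" if "s * (x - e) \<le> 0" "\<bar>s\<bar> = 1" for s x X
  proof -
    have "DERIV (F s) x :> s * (exp (- q * (x - e)\<^sup>2) * (- q * (2 * (x - e)))) / (2 * q)"
      unfolding F_def by (auto intro!: derivative_eq_intros)
    moreover have "s * (exp (- q * (x - e)\<^sup>2) * (- q * (2 * (x - e)))) / (2 * q) = ?h x"
      using that q by (auto simp: abs_if field_simps split: if_splits)
    ultimately show ?thesis
      by (simp add: has_real_derivative_iff_has_vector_derivative has_vector_derivative_at_within)
  qed
  have "(LBINT x=ereal a..ereal e. ?h x) = F 1 e - F 1 a"
  proof (rule interval_integral_FTC_finite)
    fix x assume "min a e \<le> x" "x \<le> max a e"
    then show "(F 1 has_vector_derivative ?h x) (at x within {min a e..max a e})" using ae by (intro F') auto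
  qed (intro continuous_intros)
  moreover have "(LBINT x=ereal e..ereal b. ?h x) = F (-1) b - F (-1) e"
  proof (rule interval_integral_FTC_finite)
    fix x assume "min e b \<le> x" "x \<le> max e b"
    then show "(F (-1) has_vector_derivative ?h x) (at x within {min e b..max e b})" using eb by (intro F') auto
  qed (intro continuous_intros)
  moreover have "(LBINT x=ereal a..ereal e. ?h x) + (LBINT x=ereal e..ereal b. ?h x) = (LBINT x=ereal a..ereal b. ?h x)"
    by (rule interval_integral_sum) (use ii ae eb in \<open>simp add: min_def max_def\<close>)
  moreover have "F 1 e - F 1 a \<le> 1 / (2 * q)" "F (-1) b - F (-1) e \<le> 1 / (2 * q)"
    using q by (simp_all add: F_def)
  ultimately show "(LINT x:{a<..<b}|lborel. ?h x) \<le> 1 / q"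
    using ae eb by (simp add: interval_lebesgue_integral_def einterval_ereal)
qed

lemma set_integral_exp_le:
  fixes a k :: real
  assumes a: "a \<le> 0" and k: "k > 0"
  shows "set_integrable lborel {a<..<0} (\<lambda>x. exp (k * x))"
    and "(LINT x:{a<..<0}|lborel. exp (k * x)) \<le> 1 / k"
proof -
  show "set_integrable lborel {a<..<0} (\<lambda>x. exp (k * x))"
    using interval_integrable_isCont[of a 0 "\<lambda>x. exp (k * x)"] a
    by (simp add: interval_lebesgue_integrable_def einterval_ereal)
  have "(LBINT x=ereal a..ereal 0. exp (k * x)) = exp (k * 0) / k - exp (k * a) / k"
  proof (rule interval_integral_FTC_finite)
    fix x
    have "DERIV (\<lambda>x. exp (k * x) / k) x :> exp (k * x) * k / k" by (auto intro!: derivative_eq_intros)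
    then show "((\<lambda>x. exp (k * x) / k) has_vector_derivative exp (k * x)) (at x within {min a 0..max a 0})"
      using k by (simp add: has_real_derivative_iff_has_vector_derivative has_vector_derivative_at_within)
  qed (intro continuous_intros)
  then show "(LINT x:{a<..<0}|lborel. exp (k * x)) \<le> 1 / k"
    using a k by (simp add: interval_lebesgue_integral_def einterval_ereal divide_right_mono)
qed

text \<open>Laplace's method in its crudest form: an upper envelope \<open>A U\<close> of the weighted moment and a
  lower bound \<open>A L\<close> of the weight on an interval of length \<open>v - u\<close>; the (huge) scale \<open>A\<close> cancels.\<close>
lemma weighted_moment_le_envelope:
  fixes W K U :: "real \<Rightarrow> real"
  assumes W: "set_integrable lborel S W" "\<And>x. x \<in> S \<Longrightarrow> 0 \<le> W x"
    and WK: "set_integrable lborel S (\<lambda>x. W x * K x)" "\<And>x. x \<in> S \<Longrightarrow> 0 \<le> K x"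
    and U: "set_integrable lborel S U" "\<And>x. x \<in> S \<Longrightarrow> W x * K x \<le> A * U x"
    and low: "{u<..<v} \<subseteq> S" "u < v" "\<And>x. x \<in> {u<..<v} \<Longrightarrow> A * L \<le> W x" and AL: "0 < A" "0 < L"
  shows "0 \<le> (LINT x:S|lborel. W x * K x) / (LINT x:S|lborel. W x)"
    and "(LINT x:S|lborel. W x * K x) / (LINT x:S|lborel. W x) \<le> (LINT x:S|lborel. U x) / (L * (v - u))"
proof -
  have num: "(LINT x:S|lborel. W x * K x) \<le> A * (LINT x:S|lborel. U x)"
    using set_integral_mono[OF WK(1) set_integrable_mult_right[OF U(1)] U(2)] by simp
  have "A * L * (v - u) = (\<integral>x. indicator {u<..<v} x * (A * L) \<partial>lborel)"
    using low(2) by simp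
  also have "\<dots> \<le> (\<integral>x. indicator S x * W x \<partial>lborel)"
  proof (rule integral_mono)
    show "integrable lborel (\<lambda>x. indicator {u<..<v} x * (A * L))"
      using low(2) by (intro integrable_mult_left integrable_real_indicator) auto
    show "integrable lborel (\<lambda>x. indicator S x * W x)" using W(1) by (simp add: set_integrable_def)
    show "indicator {u<..<v} x * (A * L) \<le> indicator S x * W x" for x
      using low(1,3) W(2) by (auto simp: indicator_def)
  qed
  finally have den: "A * L * (v - u) \<le> (LINT x:S|lborel. W x)" by (simp add: set_lebesgue_integral_def)
  have "0 \<le> (LINT x:S|lborel. W x * K x)"
    using W(2) WK(2) unfolding set_lebesgue_integral_def
    by (intro integral_nonneg_AE) (auto simp: indicator_def)
  moreover have "0 < A * L * (v - u)" using AL low(2) by simp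
  ultimately show "0 \<le> (LINT x:S|lborel. W x * K x) / (LINT x:S|lborel. W x)" using den by simp
  have "(LINT x:S|lborel. W x * K x) / (LINT x:S|lborel. W x)
      \<le> (A * (LINT x:S|lborel. U x)) / (A * L * (v - u))"
    using num den AL low(2) \<open>0 \<le> (LINT x:S|lborel. W x * K x)\<close> by (intro frac_le) auto
  also have "\<dots> = (LINT x:S|lborel. U x) / (L * (v - u))" using AL by simp
  finally show "(LINT x:S|lborel. W x * K x) / (LINT x:S|lborel. W x) \<le> (LINT x:S|lborel. U x) / (L * (v - u))" .
qed

lemma one_add_shift_eq:
  fixes J \<rho> e x t :: real
  assumes "J > 0" "t = \<rho> + 2*e/J" "t \<noteq> 0"
  shows "1 + 2*(x - e)/(J*t) = (\<rho> + 2*x/J) / t"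
proof -
  have Jt: "J * t = J * \<rho> + 2 * e" using assms(1,2) by (simp add: field_simps)
  moreover have "J * t \<noteq> 0" using assms(1,3) by simp
  ultimately show ?thesis using assms(1) by (simp add: field_simps)
qed

context
  fixes J \<rho> \<epsilon> t \<beta> :: real
  assumes J: "J > 0" and \<rho>: "\<rho> > 0" and \<epsilon>: "-\<rho>*J/2 < \<epsilon>" "\<epsilon> < 0"
    and t: "t = \<rho> + 2*\<epsilon>/J" and \<beta>: "\<beta> = 1/(J*t)"
begin

text \<open>At the matching temperature \<open>\<beta> = 1/(J t)\<close> the linear term of the expansion at \<open>\<epsilon>\<close> cancels.\<close>
lemma canonical_weight_factor_neg:
  assumes x: "x < 0" "0 < \<rho> + 2*x/J"
  shows "canonical_weight J \<beta> \<rho> N x = exp (-\<beta>*\<epsilon>*real N) * t powr ((real N - 3)/2)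
    * exp ((real N - 3)/2 * (ln (1 + 2*(x - \<epsilon>)/(J*t)) - 2*(x - \<epsilon>)/(J*t)) - 3/2 * (2*(x - \<epsilon>)/(J*t)))
    / sqrt (-2*x/J)"
proof -
  have tpos: "0 < t" using \<epsilon> J by (simp add: t field_simps)
  have "0 < 1 + 2*(x - \<epsilon>)/(J*t)" using one_add_shift_eq[OF J t, of x] tpos x by simp
  with tilted_power_expansion[OF J t tpos refl, of x \<beta> N] have
    "exp (-\<beta>*x*real N) * (\<rho> + 2*x/J) powr ((real N - 3) / 2)
      = exp (-\<beta>*\<epsilon>*real N) * t powr ((real N - 3)/2) * exp ((real N - 3)/2 * (ln (1 + 2*(x - \<epsilon>)/(J*t))
          - 2*(x - \<epsilon>)/(J*t)) + ((real N - 3) * (1/(J*t) - \<beta>) - 3*\<beta>) * (x - \<epsilon>))"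
    by simp
  moreover have "((real N - 3) * (1/(J*t) - \<beta>) - 3*\<beta>) * (x - \<epsilon>) = - 3/2 * (2*(x - \<epsilon>)/(J*t))"
    using J tpos by (simp add: \<beta> field_simps)
  ultimately show ?thesis using x J by (simp add: canonical_weight_eq)
qed

lemma canonical_weight_upper_neg:
  assumes N: "N \<ge> 3" and x: "x \<in> {-\<rho>*J/2<..<0}"
  shows "canonical_weight J \<beta> \<rho> N x \<le> exp (-\<beta>*\<epsilon>*real N) * t powr ((real N - 3)/2)
    * exp (3/2) * exp (- ((real N - 3)/(J\<^sup>2*t*\<rho>)) * (x - \<epsilon>)\<^sup>2) / sqrt (-2*x/J)"
proof -
  define E where "E = exp (-\<beta>*\<epsilon>*real N) * t powr ((real N - 3)/2)"
  define M where "M = (real N - 3)/2"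
  define y where "y = 2*(x - \<epsilon>)/(J*t)"
  have tpos: "0 < t" and tle: "t \<le> \<rho>" using \<epsilon> J by (simp_all add: t field_simps)
  note xb = energy_interval_bounds[OF J x]
  have "0 < (\<rho> + 2*x/J) / t" "(\<rho> + 2*x/J) / t \<le> \<rho> / t"
    using tpos xb by (auto intro: divide_right_mono)
  then have y1: "-1 < y" and yR: "1 + y \<le> \<rho> / t"
    using one_add_shift_eq[OF J t, of x] tpos by (auto simp: y_def)
  have "M * (ln (1 + y) - y) \<le> M * (- y\<^sup>2 / (2 * (\<rho> / t)))"
    using ln_add_one_minus_le[OF y1 yR] tpos tle N by (intro mult_left_mono) (auto simp: M_def field_simps)
  also have "\<dots> = - ((real N - 3)/(J\<^sup>2*t*\<rho>)) * (x - \<epsilon>)\<^sup>2"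
    using J tpos \<rho> by (simp add: M_def y_def field_simps power2_eq_square)
  finally have "M * (ln (1 + y) - y) - 3/2 * y \<le> 3/2 + - ((real N - 3)/(J\<^sup>2*t*\<rho>)) * (x - \<epsilon>)\<^sup>2"
    using y1 by linarith
  then have ineq: "exp (M * (ln (1 + y) - y) - 3/2 * y) \<le> exp (3/2) * exp (- ((real N - 3)/(J\<^sup>2*t*\<rho>)) * (x - \<epsilon>)\<^sup>2)"
    by (simp flip: exp_add)
  have "canonical_weight J \<beta> \<rho> N x = E * exp (M * (ln (1 + y) - y) - 3/2 * y) / sqrt (-2*x/J)"
    using canonical_weight_factor_neg[of x N] x xb by (simp add: E_def M_def y_def)
  also have "\<dots> \<le> E * (exp (3/2) * exp (- ((real N - 3)/(J\<^sup>2*t*\<rho>)) * (x - \<epsilon>)\<^sup>2)) / sqrt (-2*x/J)"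
    using ineq tpos xb by (intro divide_right_mono mult_left_mono) (auto simp: E_def)
  finally show ?thesis by (simp add: E_def mult.assoc)
qed

lemma canonical_weight_lower_neg:
  assumes N: "N \<ge> 4" and x: "x \<in> {\<epsilon> - J*t/(2 * sqrt (real N))<..<\<epsilon>}"
  shows "x \<in> {-\<rho>*J/2<..<0} \<and>
    exp (-\<beta>*\<epsilon>*real N) * t powr ((real N - 3)/2) * exp (-1) / sqrt \<rho> \<le> canonical_weight J \<beta> \<rho> N x"
proof -
  define E where "E = exp (-\<beta>*\<epsilon>*real N) * t powr ((real N - 3)/2)"
  define M where "M = (real N - 3)/2"
  define y where "y = 2*(x - \<epsilon>)/(J*t)"
  have tpos: "0 < t" using \<epsilon> J by (simp add: t field_simps)
  have sN: "2 \<le> sqrt (real N)" using real_sqrt_le_mono[of 4 "real N"] N by simp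
  have y0: "- (1 / sqrt (real N)) < y" "y < 0"
    using x J tpos sN by (auto simp: y_def field_simps)
  have yN: "\<bar>y\<bar> \<le> 1 / sqrt (real N)" using y0 by simp
  moreover have "1 / sqrt (real N) \<le> 1/2" by (rule divide_left_mono[OF sN]) (use N in auto)
  ultimately have yh: "\<bar>y\<bar> \<le> 1/2" by linarith
  have "(\<rho> + 2*x/J) / t = 1 + y" using one_add_shift_eq[OF J t, of x] tpos by (simp add: y_def)
  moreover have "0 < 1 + y" using yh by (simp add: abs_le_iff)
  ultimately have "0 < (\<rho> + 2*x/J) / t" by simp
  then have "0 < \<rho> + 2*x/J" using tpos by (simp add: zero_less_divide_iff)
  then have xS: "x \<in> {-\<rho>*J/2<..<0}" using x \<epsilon> J by (auto simp: field_simps)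
  note xb = energy_interval_bounds[OF J xS]
  have "M * (2 * y\<^sup>2) \<le> M * (2 * (1 / real N))"
    using power_mono[OF yN abs_ge_zero, of 2] N by (intro mult_left_mono) (auto simp: M_def power_divide)
  also have "\<dots> \<le> 1" using N by (simp add: M_def field_simps)
  finally have "M * (2 * y\<^sup>2) \<le> 1" .
  moreover have "M * (- 2 * y\<^sup>2) \<le> M * (ln (1 + y) - y)"
    using ln_add_one_minus_ge[OF yh] N by (intro mult_left_mono) (auto simp: M_def)
  ultimately have "exp (-1) \<le> exp (M * (ln (1 + y) - y) - 3/2 * y)" using y0 by simp
  moreover have "sqrt (-2*x/J) \<le> sqrt \<rho>" using xb by simp
  moreover have "0 < E" using tpos by (simp add: E_def)
  ultimately have "E * exp (-1) / sqrt \<rho> \<le> E * exp (M * (ln (1 + y) - y) - 3/2 * y) / sqrt (-2*x/J)"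
    using xb by (intro frac_le mult_left_mono) auto
  moreover have "canonical_weight J \<beta> \<rho> N x = E * exp (M * (ln (1 + y) - y) - 3/2 * y) / sqrt (-2*x/J)"
    using canonical_weight_factor_neg[of x N] xS xb by (simp add: E_def M_def y_def)
  ultimately show ?thesis using xS by (simp add: E_def)
qed

end

lemma abs_drift_le:
  fixes \<beta> x :: real
  assumes "x \<in> {-\<rho>*J/2<..<0}"
  shows "\<bar>3*\<beta>*x\<bar> \<le> 3 * \<bar>\<beta>\<bar> * \<rho> * J / 2"
proof -
  have "\<bar>3*\<beta>*x\<bar> = 3 * \<bar>\<beta>\<bar> * \<bar>x\<bar>" by (simp add: abs_mult)
  also have "\<dots> \<le> 3 * \<bar>\<beta>\<bar> * (\<rho>*J/2)" using assms by (intro mult_left_mono) auto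
  finally show ?thesis by simp
qed

context
  fixes J \<rho> \<beta> d :: real
  assumes J: "J > 0" and \<rho>: "\<rho> > 0" and d: "d = 1/(\<rho>*J) - \<beta>" "0 < d"
begin

lemma canonical_weight_factor_zero:
  assumes x: "x \<in> {-\<rho>*J/2<..<0}"
  shows "canonical_weight J \<beta> \<rho> N x * sqrt (-2*x/J) = \<rho> powr ((real N - 3)/2)
    * exp ((real N - 3)/2 * (ln (1 + 2*x/(J*\<rho>)) - 2*x/(J*\<rho>)) + (real N - 3) * d * x - 3*\<beta>*x)"
proof -
  note xb = energy_interval_bounds[OF J x]
  have "0 < 1 + 2*x/(J*\<rho>)" using one_add_shift_eq[OF J, where e=0 and t=\<rho> and x=x] \<rho> xb by simp
  then have "exp (-\<beta>*x*real N) * (\<rho> + 2*x/J) powr ((real N - 3) / 2)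
      = exp (-\<beta>*0*real N) * \<rho> powr ((real N - 3) / 2) * exp ((real N - 3) / 2
        * (ln (1 + 2*x/(J*\<rho>)) - 2*x/(J*\<rho>)) + ((real N - 3) * (1/(J*\<rho>) - \<beta>) - 3*\<beta>) * (x - 0))"
    by (intro tilted_power_expansion) (use J \<rho> in auto)
  moreover have "((real N - 3) * (1/(J*\<rho>) - \<beta>) - 3*\<beta>) * (x - 0) = (real N - 3) * d * x - 3*\<beta>*x"
    by (simp add: d(1) algebra_simps)
  ultimately show ?thesis using x xb J by (simp add: canonical_weight_eq)
qed

lemma canonical_weight_upper_zero:
  assumes N: "N \<ge> 3" and x: "x \<in> {-\<rho>*J/2<..<0}"
  shows "canonical_weight J \<beta> \<rho> N x * sqrt (-2*x/J)
    \<le> \<rho> powr ((real N - 3)/2) * exp (3 * \<bar>\<beta>\<bar> * \<rho> * J / 2) * exp ((real N - 3) * d * x)"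
proof -
  define y where "y = 2*x/(J*\<rho>)"
  have "0 < 1 + y" using one_add_shift_eq[OF J, where e=0 and t=\<rho> and x=x] \<rho> energy_interval_bounds[OF J x]
    by (simp add: y_def)
  then have "(real N - 3)/2 * (ln (1 + y) - y) \<le> 0"
    using ln_le_minus_one[of "1 + y"] N by (simp add: mult_nonneg_nonpos)
  then have "(real N - 3)/2 * (ln (1 + y) - y) + (real N - 3) * d * x - 3*\<beta>*x
      \<le> 3 * \<bar>\<beta>\<bar> * \<rho> * J / 2 + (real N - 3) * d * x"
    using abs_drift_le[OF x, of \<beta>] by (simp add: abs_le_iff)
  then have "\<rho> powr ((real N - 3)/2) * exp ((real N - 3)/2 * (ln (1 + y) - y) + (real N - 3) * d * x - 3*\<beta>*x)
      \<le> \<rho> powr ((real N - 3)/2) * (exp (3 * \<bar>\<beta>\<bar> * \<rho> * J / 2) * exp ((real N - 3) * d * x))"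
    by (intro mult_left_mono) (auto simp flip: exp_add)
  then show ?thesis using canonical_weight_factor_zero[OF x, of N] by (simp only: y_def mult.assoc)
qed

lemma canonical_weight_lower_zero:
  assumes N: "N \<ge> 3" and NJ: "4/(J*\<rho>) \<le> real N" and x: "x \<in> {-1/real N<..<0}"
  shows "x \<in> {-\<rho>*J/2<..<0} \<and> \<rho> powr ((real N - 3)/2) * exp (- (d + 3 * \<bar>\<beta>\<bar> * \<rho> * J / 2 + 4/(J\<^sup>2*\<rho>\<^sup>2)))
    \<le> canonical_weight J \<beta> \<rho> N x * sqrt (-2*x/J)"
proof -
  define M where "M = (real N - 3)/2"
  define y where "y = 2*x/(J*\<rho>)"
  have M0: "0 \<le> M" using N by (simp add: M_def)
  have Np: "0 < real N" using N by simp
  have xN: "\<bar>x\<bar> \<le> 1 / real N" using x by auto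
  have "1 / real N \<le> J*\<rho>/4" using NJ Np J \<rho> by (simp add: field_simps)
  then have xS: "x \<in> {-\<rho>*J/2<..<0}" using x J \<rho> by (auto simp: field_simps)
  have "\<bar>y\<bar> = 2 * \<bar>x\<bar> / (J*\<rho>)" using J \<rho> by (simp add: y_def abs_mult)
  also have "\<dots> \<le> 2 * (1 / real N) / (J*\<rho>)" using xN J \<rho> by (intro divide_right_mono) auto
  finally have yN: "\<bar>y\<bar> \<le> 2 / (real N * J * \<rho>)" by simp
  also have "\<dots> \<le> 1/2" using NJ Np J \<rho> by (simp add: field_simps)
  finally have yh: "\<bar>y\<bar> \<le> 1/2" .
  have "M * (2 * y\<^sup>2) \<le> M * (2 * (2 / (real N * J * \<rho>))\<^sup>2)"
    using power_mono[OF yN abs_ge_zero, of 2] M0 by (intro mult_left_mono) auto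
  also have "\<dots> = (real N - 3) / real N * (4 / (real N * J\<^sup>2 * \<rho>\<^sup>2))"
    using Np J \<rho> by (simp add: M_def power2_eq_square field_simps)
  also have "\<dots> \<le> 1 * (4 / (1 * J\<^sup>2 * \<rho>\<^sup>2))"
    using Np J \<rho> N by (intro mult_mono divide_left_mono) (auto simp: field_simps)
  finally have y2: "M * (2 * y\<^sup>2) \<le> 4 / (J\<^sup>2 * \<rho>\<^sup>2)" by simp
  have "(real N - 3) * \<bar>x\<bar> \<le> real N * (1 / real N)" using xN N by (intro mult_mono) auto
  then have "- d \<le> (real N - 3) * d * x"
    using x d(2) N Np mult_left_mono[of "(real N - 3) * \<bar>x\<bar>" 1 d] by (auto simp: abs_if algebra_simps)
  moreover have "M * (- 2 * y\<^sup>2) \<le> M * (ln (1 + y) - y)"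
    using ln_add_one_minus_ge[OF yh] M0 by (rule mult_left_mono)
  ultimately have "- (d + 3 * \<bar>\<beta>\<bar> * \<rho> * J / 2 + 4/(J\<^sup>2*\<rho>\<^sup>2)) \<le> M * (ln (1 + y) - y) + (real N - 3) * d * x - 3*\<beta>*x"
    using y2 abs_drift_le[OF xS, of \<beta>] by (auto simp: abs_le_iff)
  then have "\<rho> powr ((real N - 3)/2) * exp (- (d + 3 * \<bar>\<beta>\<bar> * \<rho> * J / 2 + 4/(J\<^sup>2*\<rho>\<^sup>2)))
      \<le> \<rho> powr ((real N - 3)/2) * exp (M * (ln (1 + y) - y) + (real N - 3) * d * x - 3*\<beta>*x)"
    by (intro mult_left_mono) auto
  then show ?thesis using canonical_weight_factor_zero[OF xS, of N] xS by (simp add: M_def y_def)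
qed

end

text \<open>Away from \<open>\<epsilon>\<close> the Gaussian factor is small, near \<open>0\<close> the singular factor is bounded.\<close>
lemma gauss_abs_div_sqrt_le:
  fixes q \<epsilon> x J :: real
  assumes q: "0 < q" and \<epsilon>: "\<epsilon> < 0" and x: "x < 0" and J: "0 < J"
  shows "exp (- q * (x - \<epsilon>)\<^sup>2) * \<bar>x - \<epsilon>\<bar> / sqrt (-2*x/J)
    \<le> exp (- q * (x - \<epsilon>)\<^sup>2) * \<bar>x - \<epsilon>\<bar> / sqrt (-\<epsilon>/J) + 2 / (-\<epsilon> * q) * (1 / sqrt (-2*x/J))"
proof -
  let ?h = "exp (- q * (x - \<epsilon>)\<^sup>2) * \<bar>x - \<epsilon>\<bar>"
  have s: "0 < sqrt (-2*x/J)" "0 < sqrt (-\<epsilon>/J)" using x \<epsilon> J by (simp_all add: field_simps)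
  show ?thesis
  proof (cases "x \<le> \<epsilon>/2")
    case True
    then have "sqrt (-\<epsilon>/J) \<le> sqrt (-2*x/J)" using J by (simp add: divide_right_mono)
    then have "?h / sqrt (-2*x/J) \<le> ?h / sqrt (-\<epsilon>/J)" using s by (intro divide_left_mono) auto
    moreover have "0 \<le> 2 / (-\<epsilon> * q) * (1 / sqrt (-2*x/J))"
      using s q \<epsilon> by (intro mult_nonneg_nonneg divide_nonneg_pos) (auto simp: mult_neg_pos)
    ultimately show ?thesis by linarith
  next
    case False
    then have d: "-\<epsilon>/2 \<le> x - \<epsilon>" "0 < x - \<epsilon>" using \<epsilon> by auto
    have z: "q * (x - \<epsilon>)\<^sup>2 \<le> exp (q * (x - \<epsilon>)\<^sup>2)"
      using exp_ge_add_one_self[of "q * (x - \<epsilon>)\<^sup>2"] by linarith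
    have "?h = (x - \<epsilon>) / exp (q * (x - \<epsilon>)\<^sup>2)" using d by (simp add: exp_minus field_simps)
    also have "\<dots> \<le> (x - \<epsilon>) / (q * (x - \<epsilon>)\<^sup>2)" using z d q by (intro divide_left_mono) auto
    also have "\<dots> = 1 / (q * (x - \<epsilon>))" using d by (simp add: power2_eq_square)
    also have "\<dots> \<le> 1 / (q * (-\<epsilon>/2))"
    proof (rule divide_left_mono)
      show "q * (-\<epsilon>/2) \<le> q * (x - \<epsilon>)" using d q by (intro mult_left_mono) auto
      show "0 < q * (x - \<epsilon>) * (q * (-\<epsilon>/2))" using d q \<epsilon> by (intro mult_pos_pos) auto
    qed simp
    also have "\<dots> = 2 / (-\<epsilon> * q)" by (simp add: field_simps)
    finally have "?h / sqrt (-2*x/J) \<le> 2 / (-\<epsilon> * q) / sqrt (-2*x/J)"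
      using s by (intro divide_right_mono) auto
    moreover have "0 \<le> ?h / sqrt (-\<epsilon>/J)" using s by simp
    ultimately show ?thesis by simp
  qed
qed

lemma set_integral_gauss_inv_sqrt_le:
  fixes J \<rho> \<epsilon> q :: real
  assumes J: "J > 0" and \<rho>: "\<rho> > 0" and \<epsilon>: "-\<rho>*J/2 < \<epsilon>" "\<epsilon> < 0" and q: "0 < q"
  shows "set_integrable lborel {-\<rho>*J/2<..<0}
      (\<lambda>x. exp (3/2) * (1 / sqrt (-\<epsilon>/J) * (exp (- q * (x - \<epsilon>)\<^sup>2) * \<bar>x - \<epsilon>\<bar>) + 2 / (-\<epsilon> * q) * (1 / sqrt (-2*x/J))))"
    and "(LINT x:{-\<rho>*J/2<..<0}|lborel.
        exp (3/2) * (1 / sqrt (-\<epsilon>/J) * (exp (- q * (x - \<epsilon>)\<^sup>2) * \<bar>x - \<epsilon>\<bar>) + 2 / (-\<epsilon> * q) * (1 / sqrt (-2*x/J))))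
      \<le> exp (3/2) * (1 / sqrt (-\<epsilon>/J) + 2 * (LINT x:{-\<rho>*J/2<..<0}|lborel. 1 / sqrt (-2*x/J)) / (-\<epsilon>)) / q"
proof -
  let ?S = "{-\<rho>*J/2<..<0}"
  define Q where "Q = (LINT x:?S|lborel. 1 / sqrt (-2*x/J))"
  define h where "h x = exp (- q * (x - \<epsilon>)\<^sup>2) * \<bar>x - \<epsilon>\<bar>" for x
  have h: "set_integrable lborel ?S h" "(LINT x:?S|lborel. h x) \<le> 1 / q"
    unfolding h_def using set_integral_gauss_abs_le[of "-\<rho>*J/2" \<epsilon> 0 q] \<epsilon> q by auto
  have "set_integrable lborel ?S (\<lambda>x. 1 / sqrt (-2*x/J))"
    using J \<rho> by (intro set_integrable_inv_sqrt) auto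
  then have i1: "set_integrable lborel ?S (\<lambda>x. 1 / sqrt (-\<epsilon>/J) * h x)"
    and i2: "set_integrable lborel ?S (\<lambda>x. 2 / (-\<epsilon> * q) * (1 / sqrt (-2*x/J)))"
    using h(1) by (simp_all only: set_integrable_mult_right)
  from set_integrable_mult_right[OF set_integral_add(1)[OF i1 i2]]
  show "set_integrable lborel ?S
      (\<lambda>x. exp (3/2) * (1 / sqrt (-\<epsilon>/J) * (exp (- q * (x - \<epsilon>)\<^sup>2) * \<bar>x - \<epsilon>\<bar>) + 2 / (-\<epsilon> * q) * (1 / sqrt (-2*x/J))))"
    by (simp only: h_def)
  have "(LINT x:?S|lborel. exp (3/2) * (1 / sqrt (-\<epsilon>/J) * h x + 2 / (-\<epsilon> * q) * (1 / sqrt (-2*x/J))))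
      = exp (3/2) * (1 / sqrt (-\<epsilon>/J) * (LINT x:?S|lborel. h x) + 2 / (-\<epsilon> * q) * Q)"
    unfolding set_integral_mult_right set_integral_add(2)[OF i1 i2] Q_def by (simp only: set_integral_mult_right)
  also have "\<dots> \<le> exp (3/2) * (1 / sqrt (-\<epsilon>/J) * (1 / q) + 2 / (-\<epsilon> * q) * Q)"
    using h(2) J \<epsilon> by (intro mult_left_mono add_right_mono) (auto simp: divide_nonpos_pos)
  also have "\<dots> = exp (3/2) * (1 / sqrt (-\<epsilon>/J) + 2 * Q / (-\<epsilon>)) / q" using q \<epsilon> by (simp add: field_simps)
  finally show "(LINT x:?S|lborel.
        exp (3/2) * (1 / sqrt (-\<epsilon>/J) * (exp (- q * (x - \<epsilon>)\<^sup>2) * \<bar>x - \<epsilon>\<bar>) + 2 / (-\<epsilon> * q) * (1 / sqrt (-2*x/J))))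
      \<le> exp (3/2) * (1 / sqrt (-\<epsilon>/J) + 2 * (LINT x:?S|lborel. 1 / sqrt (-2*x/J)) / (-\<epsilon>)) / q"
    by (simp only: h_def Q_def)
qed

lemma bigo_of_eventually_le:
  fixes r g :: "nat \<Rightarrow> real"
  assumes "\<forall>\<^sub>F N in sequentially. 0 \<le> r N \<and> r N \<le> C * g N"
  shows "r \<in> O(g)"
proof (rule bigoI[where c="\<bar>C\<bar>"])
  show "\<forall>\<^sub>F N in sequentially. norm (r N) \<le> \<bar>C\<bar> * norm (g N)"
    using assms by (rule eventually_mono) (auto simp: abs_mult[symmetric] intro: order_trans[OF _ abs_ge_self])
qed

context
  fixes J \<rho> \<epsilon> t \<beta> :: real
  assumes J: "J > 0" and \<rho>: "\<rho> > 0" and \<epsilon>: "-\<rho>*J/2 < \<epsilon>" "\<epsilon> < 0"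
    and t: "t = \<rho> + 2*\<epsilon>/J" and \<beta>: "\<beta> = 1/(J*t)"
begin

lemma canonical_weight_abs_moment_upper_neg:
  assumes N: "N \<ge> 3" and q: "q = (real N - 3)/(J\<^sup>2*t*\<rho>)" "0 < q" and x: "x \<in> {-\<rho>*J/2<..<0}"
  shows "canonical_weight J \<beta> \<rho> N x * \<bar>x - \<epsilon>\<bar> \<le> exp (-\<beta>*\<epsilon>*real N) * t powr ((real N - 3)/2)
    * (exp (3/2) * (1 / sqrt (-\<epsilon>/J) * (exp (- q * (x - \<epsilon>)\<^sup>2) * \<bar>x - \<epsilon>\<bar>) + 2 / (-\<epsilon> * q) * (1 / sqrt (-2*x/J))))"
proof -
  define E where "E = exp (-\<beta>*\<epsilon>*real N) * t powr ((real N - 3)/2)"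
  define h where "h = exp (- q * (x - \<epsilon>)\<^sup>2) * \<bar>x - \<epsilon>\<bar>"
  have "0 < t" using \<epsilon> J by (simp add: t field_simps)
  then have E: "0 < E" by (simp add: E_def)
  have "canonical_weight J \<beta> \<rho> N x * \<bar>x - \<epsilon>\<bar> \<le> E * exp (3/2) * exp (- q * (x - \<epsilon>)\<^sup>2) / sqrt (-2*x/J) * \<bar>x - \<epsilon>\<bar>"
    unfolding E_def q(1) by (rule mult_right_mono[OF canonical_weight_upper_neg[OF J \<rho> \<epsilon> t \<beta> N x]]) simp
  also have "\<dots> = E * exp (3/2) * (h / sqrt (-2*x/J))" by (simp add: h_def)
  also have "\<dots> \<le> E * exp (3/2) * (1 / sqrt (-\<epsilon>/J) * h + 2 / (-\<epsilon> * q) * (1 / sqrt (-2*x/J)))"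
    using gauss_abs_div_sqrt_le[OF q(2) \<epsilon>(2) _ J, of x] x E by (intro mult_left_mono) (auto simp: h_def)
  finally show ?thesis by (simp only: E_def h_def mult.assoc)
qed

lemma canonical_weight_moment_neg_le:
  assumes N: "N \<ge> 4"
  shows "0 \<le> (LINT x:{-\<rho>*J/2<..<0}|lborel. canonical_weight J \<beta> \<rho> N x * \<bar>x - \<epsilon>\<bar>)
              / (LINT x:{-\<rho>*J/2<..<0}|lborel. canonical_weight J \<beta> \<rho> N x)
    \<and> (LINT x:{-\<rho>*J/2<..<0}|lborel. canonical_weight J \<beta> \<rho> N x * \<bar>x - \<epsilon>\<bar>)
              / (LINT x:{-\<rho>*J/2<..<0}|lborel. canonical_weight J \<beta> \<rho> N x)
      \<le> 2 * exp (5/2) * (1 / sqrt (-\<epsilon>/J) + 2 * (LINT x:{-\<rho>*J/2<..<0}|lborel. 1 / sqrt (-2*x/J)) / (-\<epsilon>))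
          * sqrt \<rho> * J * \<rho> * (sqrt (real N) / (real N - 3))"
proof -
  let ?S = "{-\<rho>*J/2<..<0}"
  define Q where "Q = (LINT x:?S|lborel. 1 / sqrt (-2*x/J))"
  define X where "X = 1 / sqrt (-\<epsilon>/J) + 2 * Q / (-\<epsilon>)"
  define q where "q = (real N - 3)/(J\<^sup>2*t*\<rho>)"
  define E where "E = exp (-\<beta>*\<epsilon>*real N) * t powr ((real N - 3)/2)"
  define \<delta> where "\<delta> = J*t/(2 * sqrt (real N))"
  define h where "h x = exp (- q * (x - \<epsilon>)\<^sup>2) * \<bar>x - \<epsilon>\<bar>" for x
  define U where "U x = exp (3/2) * (1 / sqrt (-\<epsilon>/J) * h x + 2 / (-\<epsilon> * q) * (1 / sqrt (-2*x/J)))" for x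
  have N3: "N \<ge> 3" using N by simp
  have tpos: "0 < t" using \<epsilon> J by (simp add: t field_simps)
  have q: "0 < q" using N J tpos \<rho> by (simp add: q_def)
  have E: "0 < E" using tpos by (simp add: E_def)
  have \<delta>: "0 < \<delta>" using J tpos N by (simp add: \<delta>_def)
  note envelope = set_integral_gauss_inv_sqrt_le[OF J \<rho> \<epsilon> q]
  have U: "set_integrable lborel ?S U" unfolding U_def[abs_def] h_def by (rule envelope(1))
  have intU: "(LINT x:?S|lborel. U x) \<le> exp (3/2) * X / q"
    unfolding U_def h_def X_def Q_def by (rule envelope(2))
  have WK: "canonical_weight J \<beta> \<rho> N x * \<bar>x - \<epsilon>\<bar> \<le> E * U x" if "x \<in> ?S" for x
    unfolding E_def U_def h_def by (rule canonical_weight_abs_moment_upper_neg[OF N3 q_def q that])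
  have low: "x \<in> ?S \<and> E * (exp (-1) / sqrt \<rho>) \<le> canonical_weight J \<beta> \<rho> N x" if "x \<in> {\<epsilon> - \<delta><..<\<epsilon>}" for x
    using canonical_weight_lower_neg[OF J \<rho> \<epsilon> t \<beta> N, of x] that by (simp add: E_def \<delta>_def)
  have Wint: "set_integrable lborel ?S (canonical_weight J \<beta> \<rho> N)"
    using set_integrable_canonical_weight_mult[OF J \<rho> N3 continuous_on_const, of 1 1 \<beta>] by simp
  have WKint: "set_integrable lborel ?S (\<lambda>x. canonical_weight J \<beta> \<rho> N x * \<bar>x - \<epsilon>\<bar>)"
    using \<epsilon> by (intro set_integrable_canonical_weight_mult[OF J \<rho> N3, where C="\<rho>*J"] continuous_intros) auto
  have sub: "{\<epsilon> - \<delta><..<\<epsilon>} \<subseteq> ?S" using low by blast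
  have L: "0 < exp (-1) / sqrt \<rho>" using \<rho> by simp
  have uv: "\<epsilon> - \<delta> < \<epsilon>" using \<delta> by simp
  note env = weighted_moment_le_envelope[OF Wint canonical_weight_pos[OF J, THEN less_imp_le] WKint abs_ge_zero
      U WK sub uv conjunct2[OF low] E L]
  have "(LINT x:?S|lborel. canonical_weight J \<beta> \<rho> N x * \<bar>x - \<epsilon>\<bar>) / (LINT x:?S|lborel. canonical_weight J \<beta> \<rho> N x)
      \<le> (LINT x:?S|lborel. U x) / (exp (-1) / sqrt \<rho> * \<delta>)"
    using env(2) by simp
  also have "\<dots> \<le> (exp (3/2) * X / q) / (exp (-1) / sqrt \<rho> * \<delta>)"
    using intU mult_pos_pos[OF L \<delta>] by (intro divide_right_mono) auto
  also have "\<dots> = 2 * exp (5/2) * X * sqrt \<rho> * J * \<rho> * (sqrt (real N) / (real N - 3))"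
  proof -
    have e: "exp (3/2::real) = exp (5/2) * exp (-1)" by (simp flip: exp_add)
    have "real N - 3 \<noteq> 0" "sqrt (real N) \<noteq> 0" using N by auto
    then show ?thesis unfolding e q_def \<delta>_def using J tpos \<rho> by (simp add: field_simps power2_eq_square)
  qed
  finally show ?thesis using env(1) unfolding X_def Q_def by simp
qed

end

lemma canonical_weight_moment_neg:
  fixes J \<rho> \<epsilon> \<beta> :: real
  assumes J: "J > 0" and \<rho>: "\<rho> > 0" and \<epsilon>: "-\<rho>*J/2 < \<epsilon>" "\<epsilon> < 0" and \<beta>: "\<beta> = (1/J) / (\<rho> + 2*\<epsilon>/J)"
  shows "(\<lambda>N. (LINT x:{-\<rho>*J/2<..<0}|lborel. canonical_weight J \<beta> \<rho> N x * \<bar>x - \<epsilon>\<bar>)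
              / (LINT x:{-\<rho>*J/2<..<0}|lborel. canonical_weight J \<beta> \<rho> N x))
         \<in> O(\<lambda>N. 1 / sqrt (real N))"
proof -
  have "\<beta> = 1/(J*(\<rho> + 2*\<epsilon>/J))" using \<beta> by simp
  note bound = canonical_weight_moment_neg_le[OF J \<rho> \<epsilon> refl this]
  have "(\<lambda>N. (LINT x:{-\<rho>*J/2<..<0}|lborel. canonical_weight J \<beta> \<rho> N x * \<bar>x - \<epsilon>\<bar>)
              / (LINT x:{-\<rho>*J/2<..<0}|lborel. canonical_weight J \<beta> \<rho> N x))
         \<in> O(\<lambda>N. sqrt (real N) / (real N - 3))"
    using eventually_mono[OF eventually_ge_at_top[of 4] bound] by (rule bigo_of_eventually_le)
  moreover have "(\<lambda>N. sqrt (real N) / (real N - 3)) \<in> O(\<lambda>N. 1 / sqrt (real N))" by real_asymp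
  ultimately show ?thesis by (rule landau_o.big.trans)
qed

context
  fixes J \<rho> \<beta> d :: real
  assumes J: "J > 0" and \<rho>: "\<rho> > 0" and d: "d = 1/(\<rho>*J) - \<beta>" "0 < d"
begin

lemma canonical_weight_moment_zero_le:
  assumes N: "N \<ge> 4" and NJ: "4/(J*\<rho>) \<le> real N"
  shows "0 \<le> (LINT x:{-\<rho>*J/2<..<0}|lborel. canonical_weight J \<beta> \<rho> N x * sqrt (-2*x/J))
              / (LINT x:{-\<rho>*J/2<..<0}|lborel. canonical_weight J \<beta> \<rho> N x)
    \<and> (LINT x:{-\<rho>*J/2<..<0}|lborel. canonical_weight J \<beta> \<rho> N x * sqrt (-2*x/J))
              / (LINT x:{-\<rho>*J/2<..<0}|lborel. canonical_weight J \<beta> \<rho> N x)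
      \<le> exp (3 * \<bar>\<beta>\<bar> * \<rho> * J / 2 + (d + 3 * \<bar>\<beta>\<bar> * \<rho> * J / 2 + 4/(J\<^sup>2*\<rho>\<^sup>2))) * sqrt (2/J) / d
          * (real N / ((real N - 3) * sqrt (real N)))"
proof -
  let ?S = "{-\<rho>*J/2<..<0}"
  define c where "c = 3 * \<bar>\<beta>\<bar> * \<rho> * J / 2"
  define c' where "c' = d + c + 4/(J\<^sup>2*\<rho>\<^sup>2)"
  define E where "E = \<rho> powr ((real N - 3)/2)"
  define k where "k = (real N - 3) * d"
  define L where "L = exp (- c') / sqrt (2/(real N * J))"
  define U where "U x = exp c * exp (k * x)" for x
  have N3: "N \<ge> 3" using N by simp
  have E: "0 < E" using \<rho> by (simp add: E_def)
  have k: "0 < k" using N d by (simp add: k_def)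
  have L: "0 < L" using N J by (simp add: L_def)
  have Wint: "set_integrable lborel ?S (canonical_weight J \<beta> \<rho> N)"
    using set_integrable_canonical_weight_mult[OF J \<rho> N3 continuous_on_const, of 1 1 \<beta>] by simp
  have WKint: "set_integrable lborel ?S (\<lambda>x. canonical_weight J \<beta> \<rho> N x * sqrt (-2*x/J))"
  proof (rule set_integrable_canonical_weight_mult[OF J \<rho> N3, where C="sqrt \<rho>"])
    show "continuous_on ?S (\<lambda>x. sqrt (-2*x/J))" using J by (intro continuous_intros) auto
    show "\<bar>sqrt (-2*x/J)\<bar> \<le> sqrt \<rho>" if "x \<in> ?S" for x
      using energy_interval_bounds[OF J that] by (simp add: less_imp_le)
  qed
  have K0: "0 \<le> sqrt (-2*x/J)" if "x \<in> ?S" for x using energy_interval_bounds[OF J that] by simp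
  have eI: "set_integrable lborel ?S (\<lambda>x. exp (k * x))" "(LINT x:?S|lborel. exp (k * x)) \<le> 1 / k"
    using set_integral_exp_le[of "-\<rho>*J/2" k] J \<rho> k by auto
  have U: "set_integrable lborel ?S U" unfolding U_def by (rule set_integrable_mult_right[OF eI(1)])
  have WK: "canonical_weight J \<beta> \<rho> N x * sqrt (-2*x/J) \<le> E * U x" if "x \<in> ?S" for x
    using canonical_weight_upper_zero[OF J \<rho> d N3 that] by (simp add: E_def U_def c_def k_def mult.assoc)
  have low: "x \<in> ?S \<and> E * L \<le> canonical_weight J \<beta> \<rho> N x" if x: "x \<in> {-1/real N<..<0}" for x
  proof -
    note lw = canonical_weight_lower_zero[OF J \<rho> d N3 NJ x]
    then have xS: "x \<in> ?S" ..
    note xb = energy_interval_bounds[OF J xS]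
    have "sqrt (-2*x/J) \<le> sqrt (2/(real N * J))" using x J by (auto simp: field_simps)
    then have "E * L \<le> E * exp (- c') / sqrt (-2*x/J)"
      unfolding L_def using E xb by (simp add: frac_le)
    also have "\<dots> \<le> canonical_weight J \<beta> \<rho> N x"
      using lw xb by (simp add: E_def c'_def c_def pos_divide_le_eq)
    finally show ?thesis using xS by simp
  qed
  have sub: "{-1/real N<..<0} \<subseteq> ?S" using low by blast
  have uv: "-1/real N < 0" using N by simp
  note env = weighted_moment_le_envelope[OF Wint canonical_weight_pos[OF J, THEN less_imp_le] WKint K0
      U WK sub uv conjunct2[OF low] E L]
  have "(LINT x:?S|lborel. canonical_weight J \<beta> \<rho> N x * sqrt (-2*x/J)) / (LINT x:?S|lborel. canonical_weight J \<beta> \<rho> N x)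
      \<le> (LINT x:?S|lborel. U x) / (L * (1 / real N))"
    using env(2) by simp
  also have "\<dots> \<le> (exp c * (1 / k)) / (L * (1 / real N))"
  proof (rule divide_right_mono)
    have "(LINT x:?S|lborel. U x) = exp c * (LINT x:?S|lborel. exp (k * x))"
      unfolding U_def by (rule set_integral_mult_right)
    then show "(LINT x:?S|lborel. U x) \<le> exp c * (1 / k)" using mult_left_mono[OF eI(2), of "exp c"] by simp
  qed (use L in simp)
  also have "\<dots> = exp (c + c') * sqrt (2/J) / d * (real N / ((real N - 3) * sqrt (real N)))"
  proof -
    have "sqrt (2/(real N * J)) = sqrt (2/J) / sqrt (real N)" by (simp add: real_sqrt_divide real_sqrt_mult)
    moreover have "real N - 3 \<noteq> 0" "sqrt (real N) \<noteq> 0" "sqrt (2/J) \<noteq> 0" using N J by auto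
    ultimately show ?thesis unfolding L_def k_def exp_add exp_minus using d by (simp add: field_simps)
  qed
  finally show ?thesis using env(1) unfolding c'_def c_def by simp
qed

end

lemma canonical_weight_moment_zero:
  fixes J \<rho> \<beta> :: real
  assumes J: "J > 0" and \<rho>: "\<rho> > 0" and \<beta>: "\<beta> < 1/(\<rho>*J)"
  shows "(\<lambda>N. (LINT x:{-\<rho>*J/2<..<0}|lborel. canonical_weight J \<beta> \<rho> N x * sqrt (-2*x/J))
              / (LINT x:{-\<rho>*J/2<..<0}|lborel. canonical_weight J \<beta> \<rho> N x))
         \<in> O(\<lambda>N. 1 / sqrt (real N))"
proof -
  have "0 < 1/(\<rho>*J) - \<beta>" using \<beta> by simp
  note bound = canonical_weight_moment_zero_le[OF J \<rho> refl this]
  let ?r = "\<lambda>N. (LINT x:{-\<rho>*J/2<..<0}|lborel. canonical_weight J \<beta> \<rho> N x * sqrt (-2*x/J))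
              / (LINT x:{-\<rho>*J/2<..<0}|lborel. canonical_weight J \<beta> \<rho> N x)"
  let ?C = "exp (3 * \<bar>\<beta>\<bar> * \<rho> * J / 2 + (1/(\<rho>*J) - \<beta> + 3 * \<bar>\<beta>\<bar> * \<rho> * J / 2 + 4/(J\<^sup>2*\<rho>\<^sup>2)))
    * sqrt (2/J) / (1/(\<rho>*J) - \<beta>)"
  have "\<forall>\<^sub>F N in sequentially. 4/(J*\<rho>) \<le> real N"
    using filterlim_real_sequentially unfolding filterlim_at_top by blast
  with eventually_ge_at_top[of "4::nat"]
  have "\<forall>\<^sub>F N in sequentially. 0 \<le> ?r N \<and> ?r N \<le> ?C * (real N / ((real N - 3) * sqrt (real N)))"
    by eventually_elim (rule bound)
  then have "?r \<in> O(\<lambda>N. real N / ((real N - 3) * sqrt (real N)))" by (rule bigo_of_eventually_le)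
  moreover have "(\<lambda>N. real N / ((real N - 3) * sqrt (real N))) \<in> O(\<lambda>N. 1 / sqrt (real N))" by real_asymp
  ultimately show ?thesis by (rule landau_o.big.trans)
qed

section \<open>Equivalence of ensembles\<close>

lemma abs_sqrt_diff_le_div:
  fixes a b :: real
  assumes a: "0 < a" and b: "0 \<le> b"
  shows "\<bar>sqrt a - sqrt b\<bar> \<le> \<bar>a - b\<bar> / sqrt a"
proof -
  have "(sqrt a - sqrt b) * (sqrt a + sqrt b) = a - b" using a b by (simp add: algebra_simps)
  moreover have "0 \<le> sqrt a + sqrt b" using a b by simp
  ultimately have "\<bar>sqrt a - sqrt b\<bar> * (sqrt a + sqrt b) = \<bar>a - b\<bar>" by (metis abs_mult abs_of_nonneg)
  moreover have "\<bar>sqrt a - sqrt b\<bar> * sqrt a \<le> \<bar>sqrt a - sqrt b\<bar> * (sqrt a + sqrt b)"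
    using b by (intro mult_left_mono) auto
  ultimately show ?thesis using a by (simp add: pos_le_divide_eq)
qed

lemma abs_sqrt_diff_le_sqrt_diff:
  fixes a b :: real
  assumes "0 \<le> b" "b \<le> a"
  shows "\<bar>sqrt a - sqrt b\<bar> \<le> sqrt (a - b)"
  using sqrt_add_le_add_sqrt[of b "a - b"] assms by (simp add: abs_if)

lemma MC_expect_dist_neg:
  fixes B :: real
  assumes J: "J > 0" and \<rho>: "\<rho> > 0" and \<epsilon>: "-\<rho>*J/2 < \<epsilon>" "\<epsilon> < 0"
    and N: "N \<ge> 1" and I: "I \<subseteq> {..<N}" and B: "\<And>x. \<bar>g x\<bar> \<le> B"
    and lip: "\<And>x y. \<bar>g x - g y\<bar> \<le> L2_set (\<lambda>i. x i - y i) I"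
    and x: "x \<in> {-\<rho>*J/2<..<0}"
  shows "\<bar>MC_expect J \<epsilon> \<rho> N g - MC_expect J x \<rho> N g\<bar>
    \<le> real (card I) * (2/J) * (1 / sqrt (-2*\<epsilon>/J) + 1 / sqrt (\<rho> + 2*\<epsilon>/J)) * \<bar>x - \<epsilon>\<bar>"
proof -
  have "\<epsilon> \<in> {-\<rho>*J/2<..<0}" using \<epsilon> by simp
  note xb = energy_interval_bounds[OF J x] and \<epsilon>b = energy_interval_bounds[OF J this]
  have e: "(-2*\<epsilon>/J) - (-2*x/J) = 2/J * (x - \<epsilon>)" "(\<rho> + 2*\<epsilon>/J) - (\<rho> + 2*x/J) = 2/J * (\<epsilon> - x)"
    using J by (simp_all add: field_simps)
  have d: "\<bar>(-2*\<epsilon>/J) - (-2*x/J)\<bar> = 2/J * \<bar>x - \<epsilon>\<bar>" "\<bar>(\<rho> + 2*\<epsilon>/J) - (\<rho> + 2*x/J)\<bar> = 2/J * \<bar>x - \<epsilon>\<bar>"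
    unfolding e abs_mult abs_minus_commute[of \<epsilon> x] using J by simp_all
  have "\<bar>sqrt (-2*\<epsilon>/J) - sqrt (-2*x/J)\<bar> + \<bar>sqrt (\<rho> + 2*\<epsilon>/J) - sqrt (\<rho> + 2*x/J)\<bar>
      \<le> 2/J * \<bar>x - \<epsilon>\<bar> / sqrt (-2*\<epsilon>/J) + 2/J * \<bar>x - \<epsilon>\<bar> / sqrt (\<rho> + 2*\<epsilon>/J)"
    using abs_sqrt_diff_le_div[of "-2*\<epsilon>/J" "-2*x/J"] abs_sqrt_diff_le_div[of "\<rho> + 2*\<epsilon>/J" "\<rho> + 2*x/J"]
      xb \<epsilon>b unfolding d by (intro add_mono) auto
  also have "\<dots> = (2/J) * (1 / sqrt (-2*\<epsilon>/J) + 1 / sqrt (\<rho> + 2*\<epsilon>/J)) * \<bar>x - \<epsilon>\<bar>"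
    using J \<epsilon>b by (simp add: field_simps)
  finally have sum: "\<bar>sqrt (-2*\<epsilon>/J) - sqrt (-2*x/J)\<bar> + \<bar>sqrt (\<rho> + 2*\<epsilon>/J) - sqrt (\<rho> + 2*x/J)\<bar>
      \<le> (2/J) * (1 / sqrt (-2*\<epsilon>/J) + 1 / sqrt (\<rho> + 2*\<epsilon>/J)) * \<bar>x - \<epsilon>\<bar>" .
  have "\<bar>MC_expect J \<epsilon> \<rho> N g - MC_expect J x \<rho> N g\<bar>
      \<le> real (card I) * (\<bar>sqrt (-2*\<epsilon>/J) - sqrt (-2*x/J)\<bar> + \<bar>sqrt (\<rho> + 2*\<epsilon>/J) - sqrt (\<rho> + 2*x/J)\<bar>)"
    using \<epsilon> x by (intro MC_expect_dist[OF J _ _ N I B lip]) auto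
  also have "\<dots> \<le> real (card I) * ((2/J) * (1 / sqrt (-2*\<epsilon>/J) + 1 / sqrt (\<rho> + 2*\<epsilon>/J)) * \<bar>x - \<epsilon>\<bar>)"
    by (rule mult_left_mono[OF sum]) simp
  finally show ?thesis by (simp only: mult.assoc)
qed

lemma MC_expect_dist_zero:
  fixes B :: real
  assumes J: "J > 0" and N: "N \<ge> 1" and I: "I \<subseteq> {..<N}" and B: "\<And>x. \<bar>g x\<bar> \<le> B"
    and lip: "\<And>x y. \<bar>g x - g y\<bar> \<le> L2_set (\<lambda>i. x i - y i) I"
    and x: "x \<in> {-\<rho>*J/2<..<0}"
  shows "\<bar>MC_expect J 0 \<rho> N g - MC_expect J x \<rho> N g\<bar> \<le> 2 * real (card I) * sqrt (-2*x/J)"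
proof -
  note xb = energy_interval_bounds[OF J x]
  have "\<bar>sqrt \<rho> - sqrt (\<rho> + 2*x/J)\<bar> \<le> sqrt (\<rho> - (\<rho> + 2*x/J))"
    using xb by (intro abs_sqrt_diff_le_sqrt_diff) auto
  then have sum: "\<bar>sqrt (-2*0/J) - sqrt (-2*x/J)\<bar> + \<bar>sqrt (\<rho> + 2*0/J) - sqrt (\<rho> + 2*x/J)\<bar> \<le> 2 * sqrt (-2*x/J)"
    by simp
  have "\<bar>MC_expect J 0 \<rho> N g - MC_expect J x \<rho> N g\<bar>
      \<le> real (card I) * (\<bar>sqrt (-2*0/J) - sqrt (-2*x/J)\<bar> + \<bar>sqrt (\<rho> + 2*0/J) - sqrt (\<rho> + 2*x/J)\<bar>)"
    using x by (intro MC_expect_dist[OF J _ _ N I B lip]) auto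
  also have "\<dots> \<le> real (card I) * (2 * sqrt (-2*x/J))" by (rule mult_left_mono[OF sum]) simp
  finally show ?thesis by (simp only: mult_ac)
qed

lemma MC_minus_C_expect_bigo:
  fixes B C a :: real and k :: "real \<Rightarrow> real" and c :: "nat \<Rightarrow> real"
  assumes J: "J > 0" and \<rho>: "\<rho> > 0" and I: "finite I" and B: "\<And>x. \<bar>g x\<bar> \<le> B"
    and lip: "\<And>x y. \<bar>g x - g y\<bar> \<le> L2_set (\<lambda>i. x i - y i) I"
    and k: "continuous_on {-\<rho>*J/2<..<0} k" "\<And>x. x \<in> {-\<rho>*J/2<..<0} \<Longrightarrow> \<bar>k x\<bar> \<le> C"
    and dev: "\<And>N x. N \<ge> 1 \<Longrightarrow> I \<subseteq> {..<N} \<Longrightarrow> x \<in> {-\<rho>*J/2<..<0} \<Longrightarrow>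
                 \<bar>c N - MC_expect J x \<rho> N g\<bar> \<le> a * k x"
    and moment: "(\<lambda>N. (LINT x:{-\<rho>*J/2<..<0}|lborel. canonical_weight J \<beta> \<rho> N x * k x)
                      / (LINT x:{-\<rho>*J/2<..<0}|lborel. canonical_weight J \<beta> \<rho> N x))
                 \<in> O(\<lambda>N. 1 / sqrt (real N))"
  shows "(\<lambda>N. c N - C_expect J \<beta> \<rho> N g) \<in> O(\<lambda>N. 1 / sqrt (real N))"
proof -
  let ?S = "{-\<rho>*J/2<..<0}"
  let ?r = "\<lambda>N. (LINT x:?S|lborel. canonical_weight J \<beta> \<rho> N x * k x) / (LINT x:?S|lborel. canonical_weight J \<beta> \<rho> N x)"
  obtain N1 where N1: "I \<subseteq> {..<N1}" using I finite_nat_iff_bounded by blast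
  have "norm (c N - C_expect J \<beta> \<rho> N g) \<le> \<bar>a\<bar> * norm (?r N)" if N: "N \<ge> max 3 N1" for N
  proof -
    have N3: "N \<ge> 3" and IN: "I \<subseteq> {..<N}" using N N1 by auto
    have "\<bar>c N - C_expect J \<beta> \<rho> N g\<bar>
        \<le> (LINT x:?S|lborel. canonical_weight J \<beta> \<rho> N x * (a * k x)) / (LINT x:?S|lborel. canonical_weight J \<beta> \<rho> N x)"
    proof (rule C_expect_deviation_le[OF J \<rho> N3 IN B lip, where C="\<bar>a\<bar> * C"])
      show "continuous_on ?S (\<lambda>x. a * k x)" by (intro continuous_on_mult continuous_on_const k(1))
      show "\<bar>a * k x\<bar> \<le> \<bar>a\<bar> * C" if "x \<in> ?S" for x
        unfolding abs_mult using k(2)[OF that] by (rule mult_left_mono) simp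
      show "\<bar>c N - MC_expect J x \<rho> N g\<bar> \<le> a * k x" if "x \<in> ?S" for x
        using dev[OF _ IN that] N3 by simp
    qed
    also have "\<dots> = a * ?r N" by (simp add: mult.left_commute)
    also have "\<dots> \<le> \<bar>a\<bar> * \<bar>?r N\<bar>" using abs_ge_self[of "a * ?r N"] by (simp only: abs_mult)
    finally show ?thesis by simp
  qed
  then have "(\<lambda>N. c N - C_expect J \<beta> \<rho> N g) \<in> O(?r)"
    by (intro bigoI[where c="\<bar>a\<bar>"] eventually_mono[OF eventually_ge_at_top[of "max 3 N1"]])
  from landau_o.big.trans[OF this moment] show ?thesis .
qed

lemma MC_C_equivalence_neg:
  fixes B :: real
  assumes J: "J > 0" and \<rho>: "\<rho> > 0" and \<epsilon>: "-\<rho>*J/2 < \<epsilon>" "\<epsilon> < 0"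
    and I: "finite I" and B: "\<And>x. \<bar>g x\<bar> \<le> B"
    and lip: "\<And>x y. \<bar>g x - g y\<bar> \<le> L2_set (\<lambda>i. x i - y i) I"
  shows "(\<lambda>N. MC_expect J \<epsilon> \<rho> N g - C_expect J ((1/J) / (\<rho> + 2*\<epsilon>/J)) \<rho> N g) \<in> O(\<lambda>N. 1 / sqrt (real N))"
proof (rule MC_minus_C_expect_bigo[OF J \<rho> I B lip, where k="\<lambda>x. \<bar>x - \<epsilon>\<bar>" and C="\<rho>*J"
      and a="real (card I) * (2/J) * (1 / sqrt (-2*\<epsilon>/J) + 1 / sqrt (\<rho> + 2*\<epsilon>/J))"])
  show "continuous_on {-\<rho>*J/2<..<0} (\<lambda>x. \<bar>x - \<epsilon>\<bar>)" by (intro continuous_intros)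
  show "\<bar>\<bar>x - \<epsilon>\<bar>\<bar> \<le> \<rho>*J" if "x \<in> {-\<rho>*J/2<..<0}" for x using that \<epsilon> by auto
  show "\<bar>MC_expect J \<epsilon> \<rho> N g - MC_expect J x \<rho> N g\<bar>
      \<le> real (card I) * (2/J) * (1 / sqrt (-2*\<epsilon>/J) + 1 / sqrt (\<rho> + 2*\<epsilon>/J)) * \<bar>x - \<epsilon>\<bar>"
    if "N \<ge> 1" "I \<subseteq> {..<N}" "x \<in> {-\<rho>*J/2<..<0}" for N x
    by (rule MC_expect_dist_neg[OF J \<rho> \<epsilon> that(1,2) B lip that(3)])
qed (rule canonical_weight_moment_neg[OF J \<rho> \<epsilon> refl])

lemma MC_C_equivalence_zero:
  fixes B :: real
  assumes J: "J > 0" and \<rho>: "\<rho> > 0" and \<beta>: "\<beta> < 1 / (\<rho>*J)"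
    and I: "finite I" and B: "\<And>x. \<bar>g x\<bar> \<le> B"
    and lip: "\<And>x y. \<bar>g x - g y\<bar> \<le> L2_set (\<lambda>i. x i - y i) I"
  shows "(\<lambda>N. MC_expect J 0 \<rho> N g - C_expect J \<beta> \<rho> N g) \<in> O(\<lambda>N. 1 / sqrt (real N))"
proof (rule MC_minus_C_expect_bigo[OF J \<rho> I B lip, where k="\<lambda>x. sqrt (-2*x/J)" and C="sqrt \<rho>"
      and a="2 * real (card I)"])
  show "continuous_on {-\<rho>*J/2<..<0} (\<lambda>x. sqrt (-2*x/J))" using J by (intro continuous_intros) auto
  show "\<bar>sqrt (-2*x/J)\<bar> \<le> sqrt \<rho>" if "x \<in> {-\<rho>*J/2<..<0}" for x
    using energy_interval_bounds[OF J that] by (simp add: less_imp_le)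
  show "\<bar>MC_expect J 0 \<rho> N g - MC_expect J x \<rho> N g\<bar> \<le> 2 * real (card I) * sqrt (-2*x/J)"
    if "N \<ge> 1" "I \<subseteq> {..<N}" "x \<in> {-\<rho>*J/2<..<0}" for N x
    by (rule MC_expect_dist_zero[OF J that(1,2) B lip that(3)])
qed (rule canonical_weight_moment_zero[OF J \<rho> \<beta>])

theorem theorem4p27:
  fixes J \<rho> \<epsilon> :: real and I :: "nat set" and f :: "(nat \<Rightarrow> real) \<Rightarrow> real"
  assumes "J > 0" and "\<rho> > 0"
    and "-J*\<rho>/2 < \<epsilon>" and "\<epsilon> \<le> 0"
    and "finite I"
    and "\<exists>B. \<forall>x. \<bar>f x\<bar> \<le> B"
    and "\<forall>x y. \<bar>f x - f y\<bar> \<le> sqrt (\<Sum>i\<in>I. (x i - y i)\<^sup>2)"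
  shows "(\<epsilon> < 0 \<longrightarrow>
            (\<lambda>N. MC_expect J \<epsilon> \<rho> N (f \<circ> P_I I)
                 - C_expect J ((1/J) / (\<rho> + 2*\<epsilon>/J)) \<rho> N (f \<circ> P_I I))
            \<in> O(\<lambda>N. 1 / sqrt (real N)))
       \<and> (\<epsilon> = 0 \<longrightarrow> (\<forall>\<beta>. \<beta> < 1 / (\<rho>*J) \<longrightarrow>
            (\<lambda>N. MC_expect J 0 \<rho> N (f \<circ> P_I I) - C_expect J \<beta> \<rho> N (f \<circ> P_I I))
            \<in> O(\<lambda>N. 1 / sqrt (real N))))"
proof -
  obtain B where "\<forall>x. \<bar>f x\<bar> \<le> B" using assms(6) by blast
  then have B: "\<bar>(f \<circ> P_I I) x\<bar> \<le> B" for x by simp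
  have lip: "\<bar>(f \<circ> P_I I) x - (f \<circ> P_I I) y\<bar> \<le> L2_set (\<lambda>i. x i - y i) I" for x y
    using assms(7)[rule_format, of "P_I I x" "P_I I y"] L2_set_P_I[of I x y] by (simp add: L2_set_def)
  have \<epsilon>: "-\<rho>*J/2 < \<epsilon>" using assms(3) by (simp add: mult.commute)
  show ?thesis
  proof (intro conjI impI allI)
    show "(\<lambda>N. MC_expect J \<epsilon> \<rho> N (f \<circ> P_I I) - C_expect J ((1/J) / (\<rho> + 2*\<epsilon>/J)) \<rho> N (f \<circ> P_I I))
        \<in> O(\<lambda>N. 1 / sqrt (real N))" if "\<epsilon> < 0"
      by (rule MC_C_equivalence_neg[OF assms(1,2) \<epsilon> that assms(5) B lip])
    show "(\<lambda>N. MC_expect J 0 \<rho> N (f \<circ> P_I I) - C_expect J \<beta> \<rho> N (f \<circ> P_I I))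
        \<in> O(\<lambda>N. 1 / sqrt (real N))" if "\<beta> < 1 / (\<rho>*J)" for \<beta>
      by (rule MC_C_equivalence_zero[OF assms(1,2) that assms(5) B lip])
  qed
qed

end
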